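(* Let $\mathcal{A}=\{A_1,\dots,A_n\}$ be a finite set of quantum systems with finite-dimensional Hilbert spaces, let $\rho$ be a density operator on $\mathcal{H}_{\mathcal{A}}=\mathcal{H}_{A_1}\otimes\cdots\otimes\mathcal{H}_{A_n}$, and let $q\ge 1$. If $I\subseteq J\subseteq\mathcal{A}$ are nonempty, then $$C_q(I)_\rho\le C_q(J)_\rho .$$
   Context: For a nonempty subset $J\subseteq\mathcal{A}$, $\rho_J$ denotes the reduced state (partial trace of $\rho$ over the systems not in $J$). For $q\in(0,1)\cup(1,\infty)$ the Tsallis entropy is $S_q(J)_\rho=\frac{1}{1-q}\left(\operatorname{Tr}\rho_J^q-1\right)$, and $S_1(J)_\rho:=\lim_{q\to1}S_q(J)_\rho=-\operatorname{Tr}\rho_J\log\rho_J$ is the von Neumann entropy. The $q$-deformed total correlation is $C_q(J)_\rho=\sum_{v\in J}S_q(\{v\})_\rho-S_q(J)_\rho$, the sum running over the single systems $v\in J$; for $q=1$ this is the total correlation $C(J)_\rho=\sum_{v\in J}S(\{v\})_\rho-S(J)_\rho$. *)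

theory Defs
  imports Complex_Main "HOL-Computational_Algebra.Fundamental_Theorem_Algebra"
    "Jordan_Normal_Form.Char_Poly"
begin

text \<open>Systems are elements of a type 'a; the system v carries the Hilbert space
  C^(d v) with computational basis indexed by 0 .. d v - 1. The Hilbert space of a
  finite set S of systems has as orthonormal basis the configurations of S, i.e.
  functions assigning to each v in S a basis index below d v (and 0 outside S).\<close>

type_synonym 'a config = "'a \<Rightarrow> nat"
type_synonym 'a op = "'a config \<Rightarrow> 'a config \<Rightarrow> complex"

definition configs :: "('a \<Rightarrow> nat) \<Rightarrow> 'a set \<Rightarrow> 'a config set" where
  "configs d S = {f. (\<forall>v\<in>S. f v < d v) \<and> (\<forall>v. v \<notin> S \<longrightarrow> f v = 0)}"

definition density_op :: "('a \<Rightarrow> nat) \<Rightarrow> 'a set \<Rightarrow> 'a op \<Rightarrow> bool" where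
  "density_op d S \<rho> \<longleftrightarrow>
     (\<forall>\<psi> :: 'a config \<Rightarrow> complex.
        (\<Sum>x\<in>configs d S. \<Sum>y\<in>configs d S. cnj (\<psi> x) * \<rho> x y * \<psi> y) \<in> \<real> \<and>
        Re (\<Sum>x\<in>configs d S. \<Sum>y\<in>configs d S. cnj (\<psi> x) * \<rho> x y * \<psi> y) \<ge> 0)
     \<and> (\<Sum>x\<in>configs d S. \<rho> x x) = 1"

definition glue :: "'a set \<Rightarrow> 'a config \<Rightarrow> 'a config \<Rightarrow> 'a config" where
  "glue J x z = (\<lambda>v. if v \<in> J then x v else z v)"

definition reduced :: "('a \<Rightarrow> nat) \<Rightarrow> 'a set \<Rightarrow> 'a op \<Rightarrow> 'a set \<Rightarrow> 'a op" where
  "reduced d A \<rho> J x y = (\<Sum>z\<in>configs d (A - J). \<rho> (glue J x z) (glue J y z))"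

text \<open>Matrix of an operator on H_S w.r.t. some fixed enumeration of the basis
  (its characteristic polynomial does not depend on the enumeration).\<close>
definition enum_configs :: "('a \<Rightarrow> nat) \<Rightarrow> 'a set \<Rightarrow> nat \<Rightarrow> 'a config" where
  "enum_configs d S = (SOME e. bij_betw e {..<card (configs d S)} (configs d S))"

definition op_mat :: "('a \<Rightarrow> nat) \<Rightarrow> 'a set \<Rightarrow> 'a op \<Rightarrow> complex mat" where
  "op_mat d S M = (let N = card (configs d S); e = enum_configs d S in
                   mat N N (\<lambda>(i, j). M (e i) (e j)))"

definition eigenvalues :: "('a \<Rightarrow> nat) \<Rightarrow> 'a set \<Rightarrow> 'a op \<Rightarrow> complex multiset" where
  "eigenvalues d S M = proots (char_poly (op_mat d S M))"

text \<open>For a Hermitian operator, Tr f(rho_J) is the sum of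
  f over its (real) eigenvalues; for q > 0 we have 0 powr q = 0, and ln 0 = 0 in
  Isabelle, which realises 0 log 0 = 0.\<close>
definition tsallis :: "real \<Rightarrow> ('a \<Rightarrow> nat) \<Rightarrow> 'a set \<Rightarrow> 'a op \<Rightarrow> 'a set \<Rightarrow> real" where
  "tsallis q d A \<rho> J =
     (let ev = eigenvalues d J (reduced d A \<rho> J) in
      if q = 1 then (\<Sum>e\<in>#ev. - Re e * ln (Re e))
      else ((\<Sum>e\<in>#ev. Re e powr q) - 1) / (1 - q))"

definition total_corr :: "real \<Rightarrow> ('a \<Rightarrow> nat) \<Rightarrow> 'a set \<Rightarrow> 'a op \<Rightarrow> 'a set \<Rightarrow> real" where
  "total_corr q d A \<rho> J = (\<Sum>v\<in>J. tsallis q d A \<rho> {v}) - tsallis q d A \<rho> J"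

end

theory Submission
  imports Defs "Jordan_Normal_Form.Schur_Decomposition" "HOL-Analysis.Convex"
begin

text \<open>
  Since \<open>C\<^sub>q(J) - C\<^sub>q(I) = S\<^sub>q(I) + (\<Sum>v\<in>J - I. S\<^sub>q({v})) - S\<^sub>q(J)\<close>, the claim follows by
  iterating subadditivity \<open>S\<^sub>q(X \<union> Y) \<le> S\<^sub>q(X) + S\<^sub>q(Y)\<close> for disjoint \<open>X\<close>, \<open>Y\<close>; the case
  \<open>q = 1\<close> is the limit \<open>q \<rightarrow> 1\<^sup>+\<close>. For \<open>q > 1\<close> subadditivity is equivalent to
  \<open>Tr \<rho>\<^sub>X\<^sup>q + Tr \<rho>\<^sub>Y\<^sup>q \<le> 1 + Tr \<rho>\<^bsub>XY\<^esub>\<^sup>q\<close> (Audenaert). Expand \<open>\<rho>\<^sub>X\<close>, \<open>\<rho>\<^sub>Y\<close>, \<open>\<rho>\<^bsub>XY\<^esub>\<close> in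
  orthonormal eigenbases \<open>u\<^sub>i\<close>, \<open>w\<^sub>j\<close>, \<open>e\<^sub>k\<close> with eigenvalues \<open>a\<^sub>i\<close>, \<open>b\<^sub>j\<close>, \<open>\<lambda>\<^sub>k\<close>. The weights
  \<open>D\<^sub>k\<^sub>i\<^sub>j = |\<langle>u\<^sub>i \<otimes> w\<^sub>j, e\<^sub>k\<rangle>|\<^sup>2\<close> are doubly stochastic between \<open>k\<close> and \<open>(i, j)\<close>, and
  \<open>a\<^sub>i = \<Sum>\<^sub>j\<^sub>k \<lambda>\<^sub>k D\<^sub>k\<^sub>i\<^sub>j\<close>, \<open>b\<^sub>j = \<Sum>\<^sub>i\<^sub>k \<lambda>\<^sub>k D\<^sub>k\<^sub>i\<^sub>j\<close>. With \<open>\<alpha>\<close>, \<open>\<beta>\<close>, \<open>\<gamma>\<close> the \<open>q\<close>-norms of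
  \<open>a\<close>, \<open>b\<close>, \<open>\<lambda>\<close> and \<open>p\<close>, \<open>s\<close> the Hoelder-dual unit vectors of \<open>a\<close>, \<open>b\<close>, the inequality
  \<open>(1 - p\<^sub>i)(1 - s\<^sub>j) \<ge> 0\<close> gives \<open>\<alpha> + \<beta> \<le> 1 + \<Sum> \<lambda>\<^sub>k D\<^sub>k\<^sub>i\<^sub>j p\<^sub>i s\<^sub>j\<close>, Young's inequality
  bounds the last sum by \<open>\<gamma>\<close>, and convexity of \<open>t \<mapsto> t\<^sup>q\<close> turns \<open>\<alpha> + \<beta> \<le> 1 + \<gamma>\<close> into
  \<open>\<alpha>\<^sup>q + \<beta>\<^sup>q \<le> 1 + \<gamma>\<^sup>q\<close>.
\<close>

section \<open>Unitary diagonalisation of Hermitian matrices\<close>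

lemma index_mat_adjoint [simp]:
  "i < dim_col M \<Longrightarrow> j < dim_row M \<Longrightarrow> mat_adjoint M $$ (i, j) = conjugate (M $$ (j, i))"
  unfolding mat_adjoint_def by (simp add: mat_of_rows_index)

lemma mat_adjoint_dim [simp]:
  "dim_row (mat_adjoint M) = dim_col M" "dim_col (mat_adjoint M) = dim_row M"
  unfolding mat_adjoint_def by simp_all

lemma mat_adjoint_adjoint [simp]: "mat_adjoint (mat_adjoint M) = M"
  by (rule eq_matI) auto

lemma mat_adjoint_carrier: "M \<in> carrier_mat n m \<Longrightarrow> mat_adjoint M \<in> carrier_mat m n"
  by auto

lemma mat_adjoint_mult:
  fixes A B :: "complex mat"
  assumes "A \<in> carrier_mat nr n" "B \<in> carrier_mat n nc"
  shows "mat_adjoint (A * B) = mat_adjoint B * mat_adjoint A"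
  using assms by (intro eq_matI) (auto simp: scalar_prod_def mult.commute)

definition unitary :: "nat \<Rightarrow> complex mat \<Rightarrow> bool" where
  "unitary n U \<longleftrightarrow> U \<in> carrier_mat n n \<and> mat_adjoint U * U = 1\<^sub>m n"

definition hermitian :: "complex mat \<Rightarrow> bool" where
  "hermitian A \<longleftrightarrow> mat_adjoint A = A"

lemma unitary_right_inverse: "unitary n U \<Longrightarrow> U * mat_adjoint U = 1\<^sub>m n"
  unfolding unitary_def by (metis mat_adjoint_carrier mat_mult_left_right_inverse)

lemma unitary_mult:
  assumes U: "unitary n U" and V: "unitary n V"
  shows "unitary n (U * V)"
proof -
  have U': "U \<in> carrier_mat n n" and V': "V \<in> carrier_mat n n"
    using U V by (auto simp: unitary_def)
  have aU: "mat_adjoint U \<in> carrier_mat n n" and aV: "mat_adjoint V \<in> carrier_mat n n"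
    using U' V' by auto
  have "mat_adjoint (U * V) * (U * V) = mat_adjoint V * ((mat_adjoint U * U) * V)"
    using U' V' aU aV by (simp add: mat_adjoint_mult assoc_mult_mat[of _ n n _ n _ n])
  also have "\<dots> = 1\<^sub>m n"
    using U V V' by (simp add: unitary_def)
  finally show ?thesis using U' V' by (simp add: unitary_def)
qed

lemma cscalar_square_real:
  fixes w :: "complex vec"
  shows "Im (w \<bullet>c w) = 0" "Re (w \<bullet>c w) \<ge> 0"
proof -
  have "w \<bullet>c w \<ge> 0" by (rule conjugate_square_ge_0_vec)
  then show "Im (w \<bullet>c w) = 0" "Re (w \<bullet>c w) \<ge> 0" by (auto simp: less_eq_complex_def)
qed

lemma unitary_normalised_cols:
  fixes ws :: "complex vec list"
  assumes ws: "set ws \<subseteq> carrier_vec n" "corthogonal ws" "length ws = n"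
  defines "nr \<equiv> \<lambda>w. sqrt (Re (w \<bullet>c w))"
  shows "unitary n (mat_of_cols n (map (\<lambda>w. complex_of_real (1 / nr w) \<cdot>\<^sub>v w) ws))"
proof -
  define W where "W = mat_of_cols n (map (\<lambda>w. complex_of_real (1 / nr w) \<cdot>\<^sub>v w) ws)"
  have W: "W \<in> carrier_mat n n" using ws unfolding W_def by auto
  have wsi: "ws ! i \<in> carrier_vec n" if "i < n" for i using ws that by auto
  have Wij: "W $$ (k, i) = complex_of_real (1 / nr (ws ! i)) * (ws ! i $ k)"
    if "i < n" "k < n" for i k
    using that wsi[OF that(1)] ws unfolding W_def by (simp add: mat_of_cols_index)
  have unit: "cnj (complex_of_real (1 / nr w)) * complex_of_real (1 / nr w) * (w \<bullet>c w) = 1"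
    if "w \<in> carrier_vec n" "w \<noteq> 0\<^sub>v n" for w
  proof -
    have "w \<bullet>c w > 0" using that by simp
    then have pos: "Re (w \<bullet>c w) > 0" by (simp add: less_complex_def)
    have "w \<bullet>c w = complex_of_real (nr w ^ 2)"
      using cscalar_square_real[of w] pos unfolding nr_def by (simp add: complex_eq_iff)
    moreover have "(1 / nr w) * (1 / nr w) * (nr w ^ 2) = 1"
      using pos unfolding nr_def by (simp add: power2_eq_square)
    ultimately show ?thesis by (metis complex_cnj_complex_of_real of_real_1 of_real_mult)
  qed
  have "mat_adjoint W * W = 1\<^sub>m n"
  proof (rule eq_matI)
    fix i j assume "i < dim_row (1\<^sub>m n)" and "j < dim_col (1\<^sub>m n)"
    then have i: "i < n" and j: "j < n" by auto
    have "(mat_adjoint W * W) $$ (i, j) = (\<Sum>k<n. cnj (W $$ (k, i)) * W $$ (k, j))"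
      using W i j by (simp add: scalar_prod_def atLeast0LessThan)
    also have "\<dots> = cnj (complex_of_real (1 / nr (ws ! i))) * complex_of_real (1 / nr (ws ! j)) *
        (ws ! j \<bullet>c ws ! i)"
      using i j wsi[OF i] wsi[OF j]
      by (simp add: Wij scalar_prod_def sum_distrib_left atLeast0LessThan algebra_simps)
    also have "\<dots> = 1\<^sub>m n $$ (i, j)"
    proof (cases "i = j")
      case True
      have "ws ! i \<noteq> 0\<^sub>v n" using corthogonalD[OF ws(2), of i i] ws(3) i by auto
      then show ?thesis using True unit[OF wsi[OF i]] i by simp
    next
      case False
      then have "ws ! j \<bullet>c ws ! i = 0" using corthogonalD[OF ws(2), of j i] ws(3) i j by auto
      then show ?thesis using False i j by simp
    qed
    finally show "(mat_adjoint W * W) $$ (i, j) = 1\<^sub>m n $$ (i, j)" .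
  qed (use W in auto)
  then show ?thesis using W unfolding unitary_def W_def by simp
qed

lemma unitary_with_first_col:
  fixes v :: "complex vec"
  assumes v: "v \<in> carrier_vec n" and v0: "v \<noteq> 0\<^sub>v n"
  shows "\<exists>W c. unitary n W \<and> col W 0 = c \<cdot>\<^sub>v v"
proof -
  interpret cof_vec_space n "TYPE(complex)" .
  define b where "b = basis_completion v"
  from basis_completion[OF v v0, folded b_def]
  have dist_b: "distinct b" and indep: "\<not> lin_dep (set b)" and b: "set b \<subseteq> carrier_vec n"
    and hdb: "hd b = v" and len_b: "length b = n" by auto
  have n: "n \<noteq> 0" using v v0 by auto
  from hdb len_b n obtain vs where bv: "b = v # vs" by (cases b) auto
  define ws where "ws = gram_schmidt n b"
  from gram_schmidt_result[OF b dist_b indep refl, folded ws_def]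
  have ws: "set ws \<subseteq> carrier_vec n" "corthogonal ws" "length ws = n" by (auto simp: len_b)
  have ws0: "ws ! 0 = v"
    using gram_schmidt_hd[OF v, of vs, folded bv] ws(3) n unfolding ws_def[symmetric]
    by (cases ws) auto
  define nr where "nr = (\<lambda>w::complex vec. sqrt (Re (w \<bullet>c w)))"
  define W where "W = mat_of_cols n (map (\<lambda>w. complex_of_real (1 / nr w) \<cdot>\<^sub>v w) ws)"
  have "unitary n W" unfolding W_def nr_def by (rule unitary_normalised_cols[OF ws])
  moreover have "col W 0 = complex_of_real (1 / nr v) \<cdot>\<^sub>v v"
    unfolding W_def using ws ws0 n v by (subst col_mat_of_cols) auto
  ultimately show ?thesis by blast
qed

definition diag_cons :: "'a::zero \<Rightarrow> 'a mat \<Rightarrow> 'a mat" where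
  "diag_cons a B = mat (Suc (dim_row B)) (Suc (dim_col B))
     (\<lambda>(i, j). if i = 0 \<and> j = 0 then a else if i = 0 \<or> j = 0 then 0 else B $$ (i - 1, j - 1))"

lemma diag_cons_carrier: "B \<in> carrier_mat n m \<Longrightarrow> diag_cons a B \<in> carrier_mat (Suc n) (Suc m)"
  by (simp add: diag_cons_def)

lemma diag_cons_mult:
  fixes a b :: "'a::comm_ring_1"
  assumes B: "B \<in> carrier_mat n m" and C: "C \<in> carrier_mat m k"
  shows "diag_cons a B * diag_cons b C = diag_cons (a * b) (B * C)"
proof (rule eq_matI)
  fix i j assume "i < dim_row (diag_cons (a * b) (B * C))" "j < dim_col (diag_cons (a * b) (B * C))"
  then have i: "i < Suc n" and j: "j < Suc k" using B C by (auto simp: diag_cons_def)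
  have "(diag_cons a B * diag_cons b C) $$ (i, j) =
      (\<Sum>l<Suc m. diag_cons a B $$ (i, l) * diag_cons b C $$ (l, j))"
    using B C i j by (simp add: diag_cons_def scalar_prod_def atLeast0LessThan)
  also have "\<dots> = diag_cons a B $$ (i, 0) * diag_cons b C $$ (0, j) +
      (\<Sum>l<m. diag_cons a B $$ (i, Suc l) * diag_cons b C $$ (Suc l, j))"
    by (rule sum.lessThan_Suc_shift)
  also have "\<dots> = diag_cons (a * b) (B * C) $$ (i, j)"
    using B C i j by (cases i; cases j) (auto simp: diag_cons_def scalar_prod_def atLeast0LessThan)
  finally show "(diag_cons a B * diag_cons b C) $$ (i, j) = diag_cons (a * b) (B * C) $$ (i, j)" .
qed (use B C in \<open>auto simp: diag_cons_def\<close>)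

lemma mat_adjoint_diag_cons: "mat_adjoint (diag_cons a B) = diag_cons (conjugate a) (mat_adjoint B)"
  by (rule eq_matI) (auto simp: diag_cons_def)

lemma diag_cons_one: "diag_cons 1 (1\<^sub>m n) = 1\<^sub>m (Suc n)"
  by (rule eq_matI) (auto simp: diag_cons_def)

lemma diag_cons_mat_diag: "diag_cons a (mat_diag n f) = mat_diag (Suc n) (case_nat a f)"
  by (rule eq_matI) (auto simp: diag_cons_def mat_diag_def split: nat.split)

lemma unitary_diag_cons:
  assumes "unitary n U"
  shows "unitary (Suc n) (diag_cons 1 U)"
proof -
  have U: "U \<in> carrier_mat n n" and UU: "mat_adjoint U * U = 1\<^sub>m n"
    using assms by (auto simp: unitary_def)
  have "mat_adjoint (diag_cons 1 U) * diag_cons 1 U = diag_cons 1 (mat_adjoint U * U)"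
    using diag_cons_mult[OF mat_adjoint_carrier[OF U] U] by (simp add: mat_adjoint_diag_cons)
  then show ?thesis using U UU by (simp add: unitary_def diag_cons_carrier diag_cons_one)
qed

lemma hermitian_deflation:
  assumes A: "A \<in> carrier_mat (Suc m) (Suc m)" and hA: "hermitian A"
    and W: "unitary (Suc m) W" and v: "v \<in> carrier_vec (Suc m)"
    and Av: "A *\<^sub>v v = e \<cdot>\<^sub>v v" and cW: "col W 0 = c \<cdot>\<^sub>v v"
  shows "\<exists>B. B \<in> carrier_mat m m \<and> hermitian B \<and> Im e = 0 \<and>
    mat_adjoint W * A * W = diag_cons e B"
proof -
  let ?n = "Suc m"
  have W': "W \<in> carrier_mat ?n ?n" and WW: "mat_adjoint W * W = 1\<^sub>m ?n"
    using W by (auto simp: unitary_def)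
  have aW: "mat_adjoint W \<in> carrier_mat ?n ?n" using W' by auto
  define A' where "A' = mat_adjoint W * A * W"
  have A': "A' \<in> carrier_mat ?n ?n" unfolding A'_def using A W' by auto
  have "mat_adjoint A' = mat_adjoint W * mat_adjoint (mat_adjoint W * A)"
    unfolding A'_def by (rule mat_adjoint_mult[OF mult_carrier_mat[OF aW A] W'])
  also have "mat_adjoint (mat_adjoint W * A) = A * W"
    using hA by (simp add: mat_adjoint_mult[OF aW A] hermitian_def)
  finally have hA': "mat_adjoint A' = A'"
    unfolding A'_def using assoc_mult_mat[OF aW A W'] by simp
  then have hA'ij: "A' $$ (i, j) = cnj (A' $$ (j, i))" if "i < ?n" "j < ?n" for i j
    using that A' by (metis index_mat_adjoint carrier_matD conjugate_complex_def)
  have AW0: "(A * W) $$ (k, 0) = e * W $$ (k, 0)" if k: "k < ?n" for k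
  proof -
    have "(A * W) $$ (k, 0) = (A *\<^sub>v col W 0) $ k" using A W' k by simp
    also have "A *\<^sub>v col W 0 = e \<cdot>\<^sub>v col W 0"
      unfolding cW using mult_mat_vec[OF A v] Av by (auto simp: smult_smult_assoc mult.commute)
    finally show ?thesis using W' k by simp
  qed
  have col0: "A' $$ (i, 0) = (if i = 0 then e else 0)" if i: "i < ?n" for i
  proof -
    have "A' $$ (i, 0) = (\<Sum>k<?n. mat_adjoint W $$ (i, k) * (A * W) $$ (k, 0))"
      unfolding A'_def using A W' i assoc_mult_mat[OF aW A W']
      by (simp add: scalar_prod_def atLeast0LessThan)
    also have "\<dots> = e * (mat_adjoint W * W) $$ (i, 0)"
      using W' i by (simp add: AW0 scalar_prod_def atLeast0LessThan sum_distrib_left algebra_simps)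
    finally show ?thesis using i WW by simp
  qed
  have row0: "A' $$ (0, j) = (if j = 0 then e else 0)" if j: "j < ?n" for j
    using hA'ij[of 0 j] col0[of j] col0[of 0] j by (cases "j = 0") auto
  have "e = cnj e" using hA'ij[of 0 0] col0[of 0] by simp
  then have Im_e: "Im e = 0" by (metis cnj.simps(2) neg_equal_zero)
  define B where "B = mat m m (\<lambda>(i, j). A' $$ (Suc i, Suc j))"
  have "hermitian B"
    unfolding hermitian_def
  proof (rule eq_matI)
    fix i j assume "i < dim_row B" "j < dim_col B"
    then show "mat_adjoint B $$ (i, j) = B $$ (i, j)"
      using hA'ij[of "Suc j" "Suc i"] by (simp add: B_def)
  qed (simp_all add: B_def)
  moreover have "A' = diag_cons e B"
    using A' col0 row0 by (intro eq_matI) (auto simp: diag_cons_def B_def gr0_conv_Suc)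
  moreover have "B \<in> carrier_mat m m" unfolding B_def by simp
  ultimately show ?thesis using Im_e unfolding A'_def by blast
qed

lemma hermitian_diagonalisation:
  assumes "A \<in> carrier_mat n n" and "hermitian A"
  shows "\<exists>U lam. unitary n U \<and> A * U = U * mat_diag n (\<lambda>k. complex_of_real (lam k))"
  using assms
proof (induction n arbitrary: A)
  case 0
  then show ?case
    by (intro exI[of _ "1\<^sub>m 0"] exI[of _ "\<lambda>_. 0"]) (auto simp: unitary_def mat_diag_def intro!: eq_matI)
next
  case (Suc m A)
  let ?n = "Suc m"
  have A: "A \<in> carrier_mat ?n ?n" by (rule Suc.prems(1))
  obtain es where cp: "char_poly A = (\<Prod>a\<leftarrow>es. [:- a, 1:])" and "length es = ?n"
    using char_poly_factorized[OF A] by blast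
  then obtain e es' where "es = e # es'" by (cases es) auto
  then have "eigenvalue A e" using eigenvalue_root_char_poly[OF A] cp by simp
  then have "eigenvector A (find_eigenvector A e) e" by (rule find_eigenvector[OF A])
  then obtain v where v: "v \<in> carrier_vec ?n" "v \<noteq> 0\<^sub>v ?n" and Av: "A *\<^sub>v v = e \<cdot>\<^sub>v v"
    using A unfolding eigenvector_def by auto
  obtain W c where W: "unitary ?n W" and cW: "col W 0 = c \<cdot>\<^sub>v v"
    using unitary_with_first_col[OF v] by blast
  obtain B where B: "B \<in> carrier_mat m m" "hermitian B" and Im_e: "Im e = 0"
    and AW: "mat_adjoint W * A * W = diag_cons e B"
    using hermitian_deflation[OF A Suc.prems(2) W v(1) Av cW] by blast
  obtain V lam where V: "unitary m V" and BV: "B * V = V * mat_diag m (\<lambda>k. complex_of_real (lam k))"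
    using Suc.IH[OF B] by blast
  define lam' where "lam' = case_nat (Re e) lam"
  have diag: "mat_diag ?n (\<lambda>k. complex_of_real (lam' k)) =
      diag_cons e (mat_diag m (\<lambda>k. complex_of_real (lam k)))"
    using Im_e unfolding lam'_def diag_cons_mat_diag
    by (intro arg_cong[where f = "mat_diag ?n"]) (auto simp: complex_eq_iff split: nat.split)
  have W': "W \<in> carrier_mat ?n ?n" and V': "V \<in> carrier_mat m m"
    using W V by (auto simp: unitary_def)
  have aW: "mat_adjoint W \<in> carrier_mat ?n ?n" using W' by auto
  have AWc: "A * W \<in> carrier_mat ?n ?n" using A W' by simp
  have "W * (mat_adjoint W * A * W) = (W * mat_adjoint W) * (A * W)"
    by (simp add: assoc_mult_mat[OF aW A W'] assoc_mult_mat[OF W' aW AWc])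
  then have AW_eq: "A * W = W * diag_cons e B"
    using left_mult_one_mat[OF AWc] unitary_right_inverse[OF W] by (simp add: AW)
  have Vc: "diag_cons 1 V \<in> carrier_mat ?n ?n" using V' by (rule diag_cons_carrier)
  have "A * (W * diag_cons 1 V) = W * (diag_cons e B * diag_cons 1 V)"
    using assoc_mult_mat[OF A W' Vc] assoc_mult_mat[OF W' diag_cons_carrier[OF B(1)] Vc] AW_eq
    by simp
  also have "diag_cons e B * diag_cons 1 V = diag_cons 1 V * mat_diag ?n (\<lambda>k. complex_of_real (lam' k))"
    using diag_cons_mult[OF B(1) V'] diag_cons_mult[OF V' mat_diag_dim] by (simp add: diag BV)
  also have "W * (diag_cons 1 V * mat_diag ?n (\<lambda>k. complex_of_real (lam' k))) =
      (W * diag_cons 1 V) * mat_diag ?n (\<lambda>k. complex_of_real (lam' k))"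
    using assoc_mult_mat[OF W' Vc mat_diag_dim] by simp
  finally have "A * (W * diag_cons 1 V) = (W * diag_cons 1 V) * mat_diag ?n (\<lambda>k. complex_of_real (lam' k))" .
  moreover have "unitary ?n (W * diag_cons 1 V)"
    by (rule unitary_mult[OF W unitary_diag_cons[OF V]])
  ultimately show ?case by blast
qed

lemma proots_prod_linear_factors: "proots (\<Prod>a\<leftarrow>as. [:- a, 1:]) = mset (as :: complex list)"
proof (induction as)
  case (Cons a as)
  have "(\<Prod>a\<leftarrow>as. [:- a, 1:]) \<noteq> 0" by (auto simp: prod_list_zero_iff)
  then have "proots ([:- a, 1:] * (\<Prod>a\<leftarrow>as. [:- a, 1:])) = {#a#} + mset as"
    using Cons.IH proots_linear_factor[of "- a"] by (subst proots_mult) auto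
  then show ?case by simp
qed simp

lemma hermitian_spectral_decomposition:
  assumes A: "A \<in> carrier_mat n n" and hA: "hermitian A"
  shows "\<exists>U lam. unitary n U \<and> A = U * mat_diag n (\<lambda>k. complex_of_real (lam k)) * mat_adjoint U \<and>
    proots (char_poly A) = mset (map (\<lambda>k. complex_of_real (lam k)) [0..<n])"
proof -
  obtain U lam where U: "unitary n U" and AU: "A * U = U * mat_diag n (\<lambda>k. complex_of_real (lam k))"
    using hermitian_diagonalisation[OF A hA] by blast
  let ?D = "mat_diag n (\<lambda>k. complex_of_real (lam k))"
  have U': "U \<in> carrier_mat n n" and aU: "mat_adjoint U \<in> carrier_mat n n"
    using U by (auto simp: unitary_def)
  have "A = A * (U * mat_adjoint U)" using A unitary_right_inverse[OF U] by simp
  also have "\<dots> = U * ?D * mat_adjoint U" using A U' aU by (simp add: assoc_mult_mat[symmetric] AU)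
  finally have A_eq: "A = U * ?D * mat_adjoint U" .
  have "similar_mat_wit A ?D U (mat_adjoint U)"
    using A U' aU A_eq U unitary_right_inverse[OF U]
    unfolding similar_mat_wit_def Let_def unitary_def by auto
  then have "char_poly A = char_poly ?D"
    by (intro char_poly_similar) (auto simp: similar_mat_def)
  also have "\<dots> = (\<Prod>a\<leftarrow>diag_mat ?D. [:- a, 1:])"
    by (rule char_poly_upper_triangular[of _ n]) (auto simp: upper_triangular_def mat_diag_def)
  also have "diag_mat ?D = map (\<lambda>k. complex_of_real (lam k)) [0..<n]"
    by (intro nth_equalityI) (auto simp: diag_mat_def mat_diag_def)
  finally have "proots (char_poly A) = mset (map (\<lambda>k. complex_of_real (lam k)) [0..<n])"
    by (simp only: proots_prod_linear_factors)
  then show ?thesis using U A_eq by blast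
qed

section \<open>Spectral decomposition of operators on configuration spaces\<close>

definition quadform :: "'c set \<Rightarrow> ('c \<Rightarrow> 'c \<Rightarrow> complex) \<Rightarrow> ('c \<Rightarrow> complex) \<Rightarrow> complex" where
  "quadform C M \<psi> = (\<Sum>x\<in>C. \<Sum>y\<in>C. cnj (\<psi> x) * M x y * \<psi> y)"

definition psd_op :: "'c set \<Rightarrow> ('c \<Rightarrow> 'c \<Rightarrow> complex) \<Rightarrow> bool" where
  "psd_op C M \<longleftrightarrow> (\<forall>\<psi>. quadform C M \<psi> \<in> \<real> \<and> Re (quadform C M \<psi>) \<ge> 0)"

definition hermitian_op :: "'c set \<Rightarrow> ('c \<Rightarrow> 'c \<Rightarrow> complex) \<Rightarrow> bool" where
  "hermitian_op C M \<longleftrightarrow> (\<forall>x\<in>C. \<forall>y\<in>C. M x y = cnj (M y x))"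

definition orthonormal_basis :: "'c set \<Rightarrow> nat \<Rightarrow> (nat \<Rightarrow> 'c \<Rightarrow> complex) \<Rightarrow> bool" where
  "orthonormal_basis C N u \<longleftrightarrow>
     (\<forall>k<N. \<forall>l<N. (\<Sum>x\<in>C. cnj (u k x) * u l x) = (if k = l then 1 else 0)) \<and>
     (\<forall>x\<in>C. \<forall>y\<in>C. (\<Sum>k<N. u k x * cnj (u k y)) = (if x = y then 1 else 0))"

definition eigen_decomposition ::
    "'c set \<Rightarrow> nat \<Rightarrow> (nat \<Rightarrow> 'c \<Rightarrow> complex) \<Rightarrow> (nat \<Rightarrow> real) \<Rightarrow> ('c \<Rightarrow> 'c \<Rightarrow> complex) \<Rightarrow> bool" where
  "eigen_decomposition C N u lam M \<longleftrightarrow> orthonormal_basis C N u \<and>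
     (\<forall>x\<in>C. \<forall>y\<in>C. M x y = (\<Sum>k<N. complex_of_real (lam k) * u k x * cnj (u k y)))"

lemma density_op_iff:
  "density_op d S \<rho> \<longleftrightarrow> psd_op (configs d S) \<rho> \<and> (\<Sum>x\<in>configs d S. \<rho> x x) = 1"
  unfolding density_op_def psd_op_def quadform_def by blast

lemma sum_eq_single:
  assumes "finite C" "z \<in> C" "\<forall>w\<in>C. w \<noteq> z \<longrightarrow> h w = 0"
  shows "(\<Sum>w\<in>C. h w) = (h z :: 'b :: comm_monoid_add)"
  using sum.mono_neutral_right[of C "{z}" h] assms by auto

lemma sum_swap3:
  "(\<Sum>i\<in>I. \<Sum>j\<in>J. \<Sum>k\<in>K. f i j k) = (\<Sum>k\<in>K. \<Sum>i\<in>I. \<Sum>j\<in>J. (f i j k :: 'b :: comm_monoid_add))"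
proof -
  have "(\<Sum>i\<in>I. \<Sum>j\<in>J. \<Sum>k\<in>K. f i j k) = (\<Sum>i\<in>I. \<Sum>k\<in>K. \<Sum>j\<in>J. f i j k)"
    by (rule sum.cong[OF refl], rule sum.swap)
  also have "\<dots> = (\<Sum>k\<in>K. \<Sum>i\<in>I. \<Sum>j\<in>J. f i j k)" by (rule sum.swap)
  finally show ?thesis .
qed

lemma quadform_indicator:
  assumes "finite C" and "a \<in> C"
  shows "quadform C M (\<lambda>z. if z = a then 1 else 0) = M a a"
proof -
  have "(\<Sum>y\<in>C. cnj (if x = a then 1 else 0) * M x y * (if y = a then 1 else 0)) =
      (if x = a then M a a else 0)" for x
    by (subst sum_eq_single[OF assms]) auto
  then show ?thesis
    unfolding quadform_def using assms by simp
qed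

lemma quadform_two_point:
  assumes "finite C" and "a \<in> C" "b \<in> C" "a \<noteq> b"
  shows "quadform C M (\<lambda>z. if z = a then \<alpha> else if z = b then \<beta> else 0) =
    cnj \<alpha> * \<alpha> * M a a + cnj \<alpha> * \<beta> * M a b + cnj \<beta> * \<alpha> * M b a + cnj \<beta> * \<beta> * M b b"
proof -
  have two: "(\<Sum>w\<in>C. h w) = h a + h b" if "\<forall>w\<in>C. w \<noteq> a \<and> w \<noteq> b \<longrightarrow> h w = 0"
    for h :: "_ \<Rightarrow> complex"
    using sum.mono_neutral_right[of C "{a, b}" h] assms that by auto
  show ?thesis
    unfolding quadform_def using assms by (simp add: two algebra_simps)
qed

lemma hermitian_op_if_psd:
  assumes fC: "finite C" and p: "psd_op C M"
  shows "hermitian_op C M"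
  unfolding hermitian_op_def
proof (intro ballI)
  fix a b assume a: "a \<in> C" and b: "b \<in> C"
  have R: "Im (quadform C M \<psi>) = 0" for \<psi> using p unfolding psd_op_def complex_is_Real_iff by blast
  have Ra: "Im (M a a) = 0" and Rb: "Im (M b b) = 0"
    using R quadform_indicator[OF fC a] quadform_indicator[OF fC b] by metis+
  show "M a b = cnj (M b a)"
  proof (cases "a = b")
    case True
    then show ?thesis using Ra by (simp add: complex_eq_iff)
  next
    case False
    have "Im (M a b + M b a) = 0"
      using R[of "\<lambda>z. if z = a then 1 else if z = b then 1 else 0"]
        quadform_two_point[OF fC a b False, of M 1 1] Ra Rb by simp
    moreover have "Re (M a b - M b a) = 0"
      using R[of "\<lambda>z. if z = a then 1 else if z = b then \<i> else 0"]
        quadform_two_point[OF fC a b False, of M 1 \<i>] Ra Rb by (simp add: algebra_simps)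
    ultimately show ?thesis by (simp add: complex_eq_iff)
  qed
qed

lemma orthonormal_basisD:
  assumes "orthonormal_basis C N u"
  shows "\<And>k l. k < N \<Longrightarrow> l < N \<Longrightarrow> (\<Sum>x\<in>C. cnj (u k x) * u l x) = (if k = l then 1 else 0)"
    and "\<And>x y. x \<in> C \<Longrightarrow> y \<in> C \<Longrightarrow> (\<Sum>k<N. cnj (u k x) * u k y) = (if x = y then 1 else 0)"
proof -
  show "\<And>k l. k < N \<Longrightarrow> l < N \<Longrightarrow> (\<Sum>x\<in>C. cnj (u k x) * u l x) = (if k = l then 1 else 0)"
    using assms unfolding orthonormal_basis_def by blast
  fix x y assume "x \<in> C" "y \<in> C"
  then have "cnj (\<Sum>k<N. u k x * cnj (u k y)) = cnj (if x = y then 1 else 0)"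
    using assms unfolding orthonormal_basis_def by simp
  then show "(\<Sum>k<N. cnj (u k x) * u k y) = (if x = y then 1 else 0)" by (cases "x = y") auto
qed

lemma orthonormal_basis_norm:
  assumes "orthonormal_basis C N u" and "k < N"
  shows "(\<Sum>x\<in>C. (cmod (u k x))\<^sup>2) = 1"
proof -
  have "complex_of_real (\<Sum>x\<in>C. (cmod (u k x))\<^sup>2) = (\<Sum>x\<in>C. cnj (u k x) * u k x)"
    by (simp only: of_real_sum complex_norm_square mult.commute)
  also have "\<dots> = 1" using orthonormal_basisD(1)[OF assms(1) assms(2) assms(2)] by simp
  finally show ?thesis by (metis of_real_eq_1_iff)
qed

lemma parseval:
  assumes fC: "finite C" and onb: "orthonormal_basis C N v"
  shows "(\<Sum>m<N. (cmod (\<Sum>c\<in>C. cnj (v m c) * f c))\<^sup>2) = (\<Sum>c\<in>C. (cmod (f c))\<^sup>2)"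
proof -
  have "complex_of_real (\<Sum>m<N. (cmod (\<Sum>c\<in>C. cnj (v m c) * f c))\<^sup>2) =
      (\<Sum>m<N. (\<Sum>c\<in>C. cnj (v m c) * f c) * cnj (\<Sum>c\<in>C. cnj (v m c) * f c))"
    by (simp only: of_real_sum complex_norm_square)
  also have "\<dots> = (\<Sum>m<N. \<Sum>c\<in>C. \<Sum>c'\<in>C. (f c * cnj (f c')) * (cnj (v m c) * v m c'))"
    by (simp add: sum_product mult_ac)
  also have "\<dots> = (\<Sum>c\<in>C. \<Sum>c'\<in>C. (f c * cnj (f c')) * (\<Sum>m<N. cnj (v m c) * v m c'))"
    by (simp add: sum.swap[of _ "{..<N}"] sum_distrib_left)
  also have "\<dots> = (\<Sum>c\<in>C. f c * cnj (f c))"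
    using fC by (simp add: orthonormal_basisD(2)[OF onb] if_distrib cong: if_cong)
  also have "\<dots> = complex_of_real (\<Sum>c\<in>C. (cmod (f c))\<^sup>2)"
    by (simp only: of_real_sum complex_norm_square)
  finally show ?thesis by (rule of_real_eq_iff[THEN iffD1])
qed

lemma eigen_decomposition_quadform:
  assumes s: "eigen_decomposition C N u lam M" and k: "k < N"
  shows "quadform C M (u k) = complex_of_real (lam k)"
proof -
  have onb: "orthonormal_basis C N u" using s by (simp add: eigen_decomposition_def)
  have "quadform C M (u k) = (\<Sum>x\<in>C. \<Sum>y\<in>C. \<Sum>l<N.
      complex_of_real (lam l) * (cnj (u k x) * u l x) * (cnj (u l y) * u k y))"
    using s unfolding quadform_def eigen_decomposition_def
    by (intro sum.cong refl) (simp add: sum_distrib_left sum_distrib_right mult_ac)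
  also have "\<dots> = (\<Sum>l<N. complex_of_real (lam l) *
      (\<Sum>x\<in>C. cnj (u k x) * u l x) * (\<Sum>y\<in>C. cnj (u l y) * u k y))"
    by (subst sum_swap3) (simp add: sum_distrib_left sum_distrib_right mult_ac)
  also have "\<dots> = (\<Sum>l<N. if l = k then complex_of_real (lam k) else 0)"
    by (intro sum.cong refl) (use k in \<open>auto simp: orthonormal_basisD(1)[OF onb]\<close>)
  finally show ?thesis using k by simp
qed

lemma eigen_decomposition_trace:
  assumes s: "eigen_decomposition C N u lam M"
  shows "(\<Sum>x\<in>C. M x x) = complex_of_real (\<Sum>k<N. lam k)"
proof -
  have onb: "orthonormal_basis C N u" using s by (simp add: eigen_decomposition_def)
  have "(\<Sum>x\<in>C. M x x) = (\<Sum>x\<in>C. \<Sum>k<N. complex_of_real (lam k) * (cnj (u k x) * u k x))"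
    using s unfolding eigen_decomposition_def by (intro sum.cong refl) (simp add: mult_ac)
  also have "\<dots> = (\<Sum>k<N. complex_of_real (lam k) * (\<Sum>x\<in>C. cnj (u k x) * u k x))"
    by (subst sum.swap) (simp add: sum_distrib_left)
  finally have "(\<Sum>x\<in>C. M x x) = (\<Sum>k<N. complex_of_real (lam k) * (\<Sum>x\<in>C. cnj (u k x) * u k x))" .
  then show ?thesis by (simp add: orthonormal_basisD(1)[OF onb])
qed

lemma finite_configs: "finite S \<Longrightarrow> finite (configs d S)"
proof -
  assume S: "finite S"
  have "configs d S \<subseteq> (\<lambda>g v. if v \<in> S then g v else 0) ` PiE S (\<lambda>v. {..<d v})"
  proof
    fix f assume f: "f \<in> configs d S"
    then have "restrict f S \<in> PiE S (\<lambda>v. {..<d v})" and "f = (\<lambda>v. if v \<in> S then restrict f S v else 0)"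
      by (auto simp: configs_def)
    then show "f \<in> (\<lambda>g v. if v \<in> S then g v else 0) ` PiE S (\<lambda>v. {..<d v})" by blast
  qed
  then show ?thesis using S by (meson finite_PiE finite_lessThan finite_imageI finite_subset)
qed

lemma enum_configs_bij:
  assumes "finite S"
  shows "bij_betw (enum_configs d S) {..<card (configs d S)} (configs d S)"
proof -
  have "\<exists>e. bij_betw e {..<card (configs d S)} (configs d S)"
    using ex_bij_betw_nat_finite[OF finite_configs[OF assms]] by (auto simp: atLeast0LessThan)
  then show ?thesis unfolding enum_configs_def by (rule someI_ex)
qed

lemma op_mat_carrier: "op_mat d S M \<in> carrier_mat (card (configs d S)) (card (configs d S))"
  by (simp add: op_mat_def Let_def)

lemma index_op_mat:
  "i < card (configs d S) \<Longrightarrow> j < card (configs d S) \<Longrightarrow>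
    op_mat d S M $$ (i, j) = M (enum_configs d S i) (enum_configs d S j)"
  by (simp add: op_mat_def Let_def)

lemma hermitian_op_mat:
  assumes S: "finite S" and h: "hermitian_op (configs d S) M"
  shows "hermitian (op_mat d S M)"
  unfolding hermitian_def
proof (rule eq_matI)
  let ?N = "card (configs d S)" and ?e = "enum_configs d S"
  fix i j assume "i < dim_row (op_mat d S M)" "j < dim_col (op_mat d S M)"
  then have i: "i < ?N" and j: "j < ?N" using op_mat_carrier[of d S M] by auto
  have "?e i \<in> configs d S" "?e j \<in> configs d S"
    using enum_configs_bij[OF S] i j by (auto simp: bij_betw_def)
  then have "M (?e j) (?e i) = cnj (M (?e i) (?e j))"
    using h unfolding hermitian_op_def by blast
  then show "mat_adjoint (op_mat d S M) $$ (i, j) = op_mat d S M $$ (i, j)"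
    using i j op_mat_carrier[of d S M] by (simp add: index_op_mat)
qed (use op_mat_carrier[of d S M] in auto)

lemma eigen_decomposition_of_unitary:
  assumes bij: "bij_betw e {..<N} C" and U: "unitary N U"
    and M: "\<forall>i<N. \<forall>j<N. M (e i) (e j) = (U * mat_diag N (\<lambda>k. complex_of_real (lam k)) * mat_adjoint U) $$ (i, j)"
  shows "eigen_decomposition C N (\<lambda>k x. U $$ (the_inv_into {..<N} e x, k)) lam M"
proof -
  have U': "U \<in> carrier_mat N N" using U by (simp add: unitary_def)
  define ix where "ix = the_inv_into {..<N} e"
  have ix: "ix x < N" "e (ix x) = x" if "x \<in> C" for x
    using bij that unfolding ix_def by (auto simp: bij_betw_def the_inv_into_f_f)
  have ix_inj: "ix x = ix y \<longleftrightarrow> x = y" if "x \<in> C" "y \<in> C" for x y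
    using ix that by metis
  have ixe: "ix (e i) = i" if "i < N" for i
    using bij that unfolding ix_def by (auto simp: bij_betw_def the_inv_into_f_f)
  define u where "u = (\<lambda>k x. U $$ (ix x, k))"
  have sumC: "(\<Sum>x\<in>C. f x) = (\<Sum>i<N. f (e i))" for f :: "_ \<Rightarrow> complex"
    using sum.reindex_bij_betw[OF bij, of f] by simp
  have "(\<Sum>x\<in>C. cnj (u k x) * u l x) = (mat_adjoint U * U) $$ (k, l)" if "k < N" "l < N" for k l
    unfolding sumC u_def using U' that ixe by (simp add: scalar_prod_def atLeast0LessThan)
  then have "(\<Sum>x\<in>C. cnj (u k x) * u l x) = (if k = l then 1 else 0)" if "k < N" "l < N" for k l
    using U that by (simp add: unitary_def)
  moreover have "(\<Sum>k<N. u k x * cnj (u k y)) = (U * mat_adjoint U) $$ (ix x, ix y)"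
    if "x \<in> C" "y \<in> C" for x y
    unfolding u_def using U' that ix by (simp add: scalar_prod_def atLeast0LessThan)
  then have "(\<Sum>k<N. u k x * cnj (u k y)) = (if x = y then 1 else 0)" if "x \<in> C" "y \<in> C" for x y
    using unitary_right_inverse[OF U] that ix ix_inj[OF that] by simp
  moreover have "M x y = (\<Sum>k<N. complex_of_real (lam k) * u k x * cnj (u k y))"
    if "x \<in> C" "y \<in> C" for x y
    using M[rule_format, OF ix(1)[OF that(1)] ix(1)[OF that(2)]] ix[OF that(1)] ix[OF that(2)] U'
    unfolding u_def
    by (simp add: mat_diag_mult_right scalar_prod_def atLeast0LessThan mult_ac)
  ultimately show ?thesis
    unfolding eigen_decomposition_def orthonormal_basis_def u_def ix_def by blast
qed

lemma eigen_decomposition_exists: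
  assumes S: "finite S" and h: "hermitian_op (configs d S) M"
  defines "N \<equiv> card (configs d S)"
  shows "\<exists>u lam. eigen_decomposition (configs d S) N u lam M \<and>
     eigenvalues d S M = mset (map (\<lambda>k. complex_of_real (lam k)) [0..<N])"
proof -
  obtain U lam where U: "unitary N U"
    and A_diag: "op_mat d S M = U * mat_diag N (\<lambda>k. complex_of_real (lam k)) * mat_adjoint U"
    and pr: "proots (char_poly (op_mat d S M)) = mset (map (\<lambda>k. complex_of_real (lam k)) [0..<N])"
    using hermitian_spectral_decomposition[OF op_mat_carrier hermitian_op_mat[OF S h]]
    unfolding N_def by blast
  have "eigen_decomposition (configs d S) N (\<lambda>k x. U $$ (the_inv_into {..<N} (enum_configs d S) x, k)) lam M"
    using enum_configs_bij[OF S] U unfolding N_def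
    by (intro eigen_decomposition_of_unitary) (simp_all add: index_op_mat flip: A_diag[unfolded N_def])
  then show ?thesis using pr unfolding eigenvalues_def by blast
qed

lemma density_eigen_decomposition:
  assumes S: "finite S" and dens: "density_op d S M"
  defines "N \<equiv> card (configs d S)"
  shows "\<exists>u lam. eigen_decomposition (configs d S) N u lam M \<and> (\<forall>k<N. lam k \<ge> 0) \<and>
    (\<Sum>k<N. lam k) = 1 \<and> eigenvalues d S M = mset (map (\<lambda>k. complex_of_real (lam k)) [0..<N])"
proof -
  have p: "psd_op (configs d S) M" and tr: "(\<Sum>x\<in>configs d S. M x x) = 1"
    using dens by (auto simp: density_op_iff)
  obtain u lam where s: "eigen_decomposition (configs d S) N u lam M"
    and ev: "eigenvalues d S M = mset (map (\<lambda>k. complex_of_real (lam k)) [0..<N])"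
    using eigen_decomposition_exists[OF S hermitian_op_if_psd[OF finite_configs[OF S] p]]
    unfolding N_def by blast
  have "lam k \<ge> 0" if "k < N" for k
    using p eigen_decomposition_quadform[OF s that] unfolding psd_op_def by (metis Re_complex_of_real)
  moreover have "(\<Sum>k<N. lam k) = 1"
    using eigen_decomposition_trace[OF s] tr by (metis of_real_eq_1_iff)
  ultimately show ?thesis using s ev by blast
qed

section \<open>Gluing configurations and the partial trace\<close>

definition restr :: "'a set \<Rightarrow> 'a config \<Rightarrow> 'a config" where
  "restr S c = (\<lambda>v. if v \<in> S then c v else 0)"

lemma glue_in_configs:
  "x \<in> configs d X \<Longrightarrow> y \<in> configs d Y \<Longrightarrow> glue X x y \<in> configs d (X \<union> Y)"
  by (auto simp: configs_def glue_def)

lemma restr_glue: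
  assumes "x \<in> configs d X" "y \<in> configs d Y" "X \<inter> Y = {}"
  shows "restr X (glue X x y) = x" "restr Y (glue X x y) = y"
  using assms by (auto simp: restr_def glue_def configs_def fun_eq_iff)

lemma glue_swap:
  assumes "x \<in> configs d X" "y \<in> configs d Y" "X \<inter> Y = {}"
  shows "glue Y y x = glue X x y"
  using assms by (auto simp: glue_def configs_def fun_eq_iff)

lemma glue_glue: "X \<subseteq> K \<Longrightarrow> glue X x (glue (K - X) y z) = glue K (glue X x y) z"
  by (auto simp: glue_def fun_eq_iff)

lemma bij_betw_glue:
  assumes "X \<inter> Y = {}"
  shows "bij_betw (\<lambda>(x, y). glue X x y) (configs d X \<times> configs d Y) (configs d (X \<union> Y))"
proof (rule bij_betw_imageI)
  show "inj_on (\<lambda>(x, y). glue X x y) (configs d X \<times> configs d Y)"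
    using restr_glue[OF _ _ assms] by (intro inj_onI) (clarsimp, metis)
  show "(\<lambda>(x, y). glue X x y) ` (configs d X \<times> configs d Y) = configs d (X \<union> Y)"
  proof
    show "configs d (X \<union> Y) \<subseteq> (\<lambda>(x, y). glue X x y) ` (configs d X \<times> configs d Y)"
    proof
      fix c assume c: "c \<in> configs d (X \<union> Y)"
      have "restr X c \<in> configs d X" "restr Y c \<in> configs d Y"
        and "glue X (restr X c) (restr Y c) = c"
        using c by (auto simp: restr_def glue_def configs_def)
      then show "c \<in> (\<lambda>(x, y). glue X x y) ` (configs d X \<times> configs d Y)"
        by (metis (no_types, lifting) SigmaI case_prod_conv image_eqI)
    qed
  qed (use glue_in_configs in fastforce)
qed

lemma sum_configs_Un:
  assumes "X \<inter> Y = {}"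
  shows "(\<Sum>c\<in>configs d (X \<union> Y). f c) = (\<Sum>x\<in>configs d X. \<Sum>y\<in>configs d Y. f (glue X x y))"
proof -
  have "(\<Sum>c\<in>configs d (X \<union> Y). f c) = (\<Sum>(x, y)\<in>configs d X \<times> configs d Y. f (glue X x y))"
    using sum.reindex_bij_betw[OF bij_betw_glue[OF assms], of f d] by (simp add: case_prod_beta)
  then show ?thesis by (simp add: sum.cartesian_product)
qed

lemma sum_configs_split:
  assumes "J \<subseteq> A"
  shows "(\<Sum>c\<in>configs d A. f c) = (\<Sum>x\<in>configs d J. \<Sum>z\<in>configs d (A - J). f (glue J x z))"
proof -
  have "J \<union> (A - J) = A" and "J \<inter> (A - J) = {}" using assms by auto
  then show ?thesis using sum_configs_Un[where X = J and Y = "A - J"] by metis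
qed

lemma sum_configs_slice:
  assumes fA: "finite A" and JA: "J \<subseteq> A" and z: "z \<in> configs d (A - J)"
    and g0: "\<forall>c\<in>configs d A. restr (A - J) c \<noteq> z \<longrightarrow> g c = 0"
  shows "(\<Sum>c\<in>configs d A. g c) = (\<Sum>x\<in>configs d J. (g (glue J x z) :: 'b :: comm_monoid_add))"
  unfolding sum_configs_split[OF JA]
proof (intro sum.cong refl sum_eq_single)
  fix x assume x: "x \<in> configs d J"
  show "finite (configs d (A - J))" using fA by (simp add: finite_configs)
  show "z \<in> configs d (A - J)" by (rule z)
  show "\<forall>w\<in>configs d (A - J). w \<noteq> z \<longrightarrow> g (glue J x w) = 0"
  proof (intro ballI impI)
    fix w assume w: "w \<in> configs d (A - J)" and "w \<noteq> z"
    moreover have "glue J x w \<in> configs d A" using glue_in_configs[OF x w] JA by (simp add: Un_absorb1)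
    moreover have "restr (A - J) (glue J x w) = w" using restr_glue[OF x w] by auto
    ultimately show "g (glue J x w) = 0" using g0 by auto
  qed
qed

lemma quadform_reduced:
  assumes fA: "finite A" and JA: "J \<subseteq> A"
  shows "quadform (configs d J) (reduced d A \<rho> J) \<psi> = (\<Sum>z\<in>configs d (A - J).
    quadform (configs d A) \<rho> (\<lambda>c. if restr (A - J) c = z then \<psi> (restr J c) else 0))"
proof -
  let ?CJ = "configs d J" and ?CZ = "configs d (A - J)" and ?CA = "configs d A"
  have "quadform ?CJ (reduced d A \<rho> J) \<psi> =
      (\<Sum>x\<in>?CJ. \<Sum>y\<in>?CJ. \<Sum>z\<in>?CZ. cnj (\<psi> x) * \<rho> (glue J x z) (glue J y z) * \<psi> y)"
    unfolding quadform_def reduced_def by (simp add: sum_distrib_left sum_distrib_right)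
  also have "\<dots> = (\<Sum>z\<in>?CZ. \<Sum>x\<in>?CJ. \<Sum>y\<in>?CJ. cnj (\<psi> x) * \<rho> (glue J x z) (glue J y z) * \<psi> y)"
    by (rule sum_swap3)
  also have "\<dots> = (\<Sum>z\<in>?CZ. quadform ?CA \<rho> (\<lambda>c. if restr (A - J) c = z then \<psi> (restr J c) else 0))"
  proof (rule sum.cong[OF refl])
    fix z assume z: "z \<in> ?CZ"
    define \<Psi> where "\<Psi> = (\<lambda>c. if restr (A - J) c = z then \<psi> (restr J c) else 0)"
    have \<Psi>_glue: "\<Psi> (glue J x z) = \<psi> x" if x: "x \<in> ?CJ" for x
      using restr_glue[OF x z] unfolding \<Psi>_def by auto
    have "quadform ?CA \<rho> \<Psi> = (\<Sum>x\<in>?CJ. \<Sum>y\<in>?CA. cnj (\<Psi> (glue J x z)) * \<rho> (glue J x z) y * \<Psi> y)"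
      unfolding quadform_def by (rule sum_configs_slice[OF fA JA z]) (auto simp: \<Psi>_def)
    also have "\<dots> = (\<Sum>x\<in>?CJ. \<Sum>y\<in>?CJ.
        cnj (\<Psi> (glue J x z)) * \<rho> (glue J x z) (glue J y z) * \<Psi> (glue J y z))"
      by (rule sum.cong[OF refl], rule sum_configs_slice[OF fA JA z]) (auto simp: \<Psi>_def)
    finally show "(\<Sum>x\<in>?CJ. \<Sum>y\<in>?CJ. cnj (\<psi> x) * \<rho> (glue J x z) (glue J y z) * \<psi> y) =
        quadform ?CA \<rho> \<Psi>"
      by (simp add: \<Psi>_glue)
  qed
  finally show ?thesis .
qed

lemma density_op_reduced:
  assumes fA: "finite A" and JA: "J \<subseteq> A" and dens: "density_op d A \<rho>"
  shows "density_op d J (reduced d A \<rho> J)"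
proof -
  have p: "psd_op (configs d A) \<rho>" and tr: "(\<Sum>c\<in>configs d A. \<rho> c c) = 1"
    using dens by (auto simp: density_op_iff)
  have "psd_op (configs d J) (reduced d A \<rho> J)"
    using p unfolding psd_op_def quadform_reduced[OF fA JA] by (auto intro: sum_nonneg)
  moreover have "(\<Sum>x\<in>configs d J. reduced d A \<rho> J x x) = 1"
    using tr unfolding reduced_def sum_configs_split[OF JA] .
  ultimately show ?thesis by (simp add: density_op_iff)
qed

lemma reduced_reduced:
  assumes XK: "X \<subseteq> K" and KA: "K \<subseteq> A"
  shows "reduced d A \<rho> X x x' = (\<Sum>y\<in>configs d (K - X). reduced d A \<rho> K (glue X x y) (glue X x' y))"
proof -
  have "A - X = (K - X) \<union> (A - K)" and "(K - X) \<inter> (A - K) = {}" using XK KA by auto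
  then show ?thesis
    unfolding reduced_def by (simp add: sum_configs_Un glue_glue[OF XK])
qed

section \<open>A scalar inequality for doubly stochastic mixtures\<close>

lemma powr_add_le_spread:
  fixes x y z q :: real
  assumes q: "q \<ge> 1" and z: "0 < z" and zy: "z \<le> y" and yx: "y \<le> x"
  shows "x powr q + y powr q \<le> (x + y - z) powr q + z powr q"
proof (cases "x = z")
  case True
  then have "y = z" using zy yx by simp
  then show ?thesis using True by simp
next
  case False
  define s where "s = x + y - z"
  have sz: "s > z" using False zy yx unfolding s_def by simp
  define t where "t = (x - z) / (s - z)"
  have t0: "t \<ge> 0" and t1: "t \<le> 1" using sz zy yx unfolding t_def s_def by (auto simp: field_simps)
  have tt: "t * (s - z) = x - z" using sz unfolding t_def by simp
  have "(1 - t) * z + t * s = z + t * (s - z)" by (simp add: algebra_simps)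
  then have xe: "x = (1 - t) * z + t * s" using tt by simp
  have ye: "y = (1 - t) * s + t * z" using xe unfolding s_def by (simp add: algebra_simps)
  have cv: "convex_on {0<..} (\<lambda>x::real. x powr q)" by (rule powr_convex[OF q])
  have spos: "s \<in> {0<..}" "z \<in> {0<..}" using sz z by auto
  have 1: "((1 - t) * z + t * s) powr q \<le> (1 - t) * z powr q + t * s powr q"
    using convex_onD[OF cv t0 t1 spos(2) spos(1)] by simp
  have 2: "((1 - t) * s + t * z) powr q \<le> (1 - t) * s powr q + t * z powr q"
    using convex_onD[OF cv t0 t1 spos(1) spos(2)] by simp
  have "x powr q + y powr q \<le> (1 - t) * z powr q + t * s powr q + ((1 - t) * s powr q + t * z powr q)"
    using 1 2 xe ye by simp
  also have "\<dots> = s powr q + z powr q" by (simp add: algebra_simps)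
  finally show ?thesis unfolding s_def .
qed

lemma powr_add_le_one_add_powr:
  fixes x y z q :: real
  assumes q: "q \<ge> 1" and x: "0 \<le> x" "x \<le> 1" and y: "0 \<le> y" "y \<le> 1" and z: "0 \<le> z" "z \<le> 1"
    and s: "x + y \<le> 1 + z"
  shows "x powr q + y powr q \<le> 1 + z powr q"
proof -
  have main: "a powr q + b powr q \<le> 1 + z powr q"
    if ab: "0 \<le> b" "b \<le> a" "a \<le> 1" "a + b \<le> 1 + z" for a b
  proof (cases "b \<le> z")
    case True
    have "a powr q \<le> 1 powr q" using ab q by (intro powr_mono2) auto
    moreover have "b powr q \<le> z powr q" using ab q True by (intro powr_mono2) auto
    ultimately show ?thesis by simp
  next
    case False
    show ?thesis
    proof (cases "z = 0")
      case True
      have "a powr q \<le> a powr 1" using ab q False True by (intro powr_mono') auto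
      moreover have "b powr q \<le> b powr 1" using ab q by (intro powr_mono') auto
      ultimately show ?thesis using ab True False by simp
    next
      case z0: False
      have "a powr q + b powr q \<le> (a + b - z) powr q + z powr q"
        by (rule powr_add_le_spread) (use q z z0 False ab in auto)
      also have "(a + b - z) powr q \<le> 1 powr q" using ab False q by (intro powr_mono2) auto
      finally show ?thesis by simp
    qed
  qed
  show ?thesis
  proof (cases "y \<le> x")
    case True then show ?thesis using main[of y x] x y s by simp
  next
    case False then show ?thesis using main[of x y] x y s by simp
  qed
qed

text \<open>The witness \<open>p = (f / \<alpha>) powr (q - 1)\<close> is the dual vector of \<open>f\<close> in Hoelder's inequality.\<close>

lemma lq_norm_duality:
  fixes f :: "nat \<Rightarrow> real"
  assumes fin: "finite I" and q: "q > 1" and f0: "\<forall>i\<in>I. f i \<ge> 0" and fs: "(\<Sum>i\<in>I. f i) = 1"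
  shows "\<exists>\<alpha> p. 0 < \<alpha> \<and> \<alpha> \<le> 1 \<and> \<alpha> powr q = (\<Sum>i\<in>I. f i powr q) \<and> (\<Sum>i\<in>I. f i * p i) = \<alpha> \<and>
    (\<forall>i\<in>I. 0 \<le> p i \<and> p i \<le> 1) \<and> (\<Sum>i\<in>I. p i powr (q / (q - 1))) = 1 \<and> (\<Sum>i\<in>I. (f i / \<alpha>) powr q) = 1"
proof -
  define S where "S = (\<Sum>i\<in>I. f i powr q)"
  have fi1: "f i \<le> 1" if "i \<in> I" for i
    using member_le_sum[of i I f] that f0 fin fs by auto
  have fq: "f i powr q \<le> f i" if "i \<in> I" for i
  proof -
    have "f i powr q \<le> f i powr 1" using q f0 fi1 that by (intro powr_mono') auto
    then show ?thesis using f0 that by simp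
  qed
  have S1: "S \<le> 1" unfolding S_def using sum_mono[of I "\<lambda>i. f i powr q" f] fq fs by auto
  obtain i0 where i0: "i0 \<in> I" "f i0 > 0"
  proof -
    have "\<exists>i\<in>I. f i \<noteq> 0" using fs by (metis sum.neutral zero_neq_one)
    then show ?thesis using that f0 by force
  qed
  have fiS: "f i powr q \<le> S" if "i \<in> I" for i
    unfolding S_def by (rule member_le_sum) (use that fin in auto)
  have S0: "S > 0" using fiS[OF i0(1)] i0(2) by (smt (verit) powr_gt_zero)
  define \<alpha> where "\<alpha> = S powr (1 / q)"
  have a0: "\<alpha> > 0" unfolding \<alpha>_def using S0 by simp
  have a1: "\<alpha> \<le> 1" unfolding \<alpha>_def using S1 S0 q by (intro powr_le1) auto
  have aq: "\<alpha> powr q = S" unfolding \<alpha>_def using q S0 by (simp add: powr_powr)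
  have fia: "f i \<le> \<alpha>" if "i \<in> I" for i
  proof -
    have "(f i powr q) powr (1 / q) \<le> S powr (1 / q)" using fiS[OF that] q by (intro powr_mono2) auto
    then show ?thesis unfolding \<alpha>_def using q f0 that by (simp add: powr_powr)
  qed
  define p where "p = (\<lambda>i. (f i / \<alpha>) powr (q - 1))"
  have pb: "0 \<le> p i \<and> p i \<le> 1" if "i \<in> I" for i
    unfolding p_def using q a0 fia[OF that] f0 that by (auto intro!: powr_le1)
  have fdq: "(f i / \<alpha>) powr q = f i powr q / S" for i
    by (simp add: powr_divide aq)
  have sum1: "(\<Sum>i\<in>I. (f i / \<alpha>) powr q) = 1"
    unfolding fdq using S0 by (simp add: S_def[symmetric] flip: sum_divide_distrib)
  have fp: "f i * p i = \<alpha> * (f i / \<alpha>) powr q" if "i \<in> I" for i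
  proof -
    have nn: "f i / \<alpha> \<ge> 0" using f0 that a0 by simp
    have "f i * p i = \<alpha> * ((f i / \<alpha>) powr 1 * (f i / \<alpha>) powr (q - 1))"
      unfolding p_def using nn a0 f0 that by simp
    also have "(f i / \<alpha>) powr 1 * (f i / \<alpha>) powr (q - 1) = (f i / \<alpha>) powr (1 + (q - 1))"
      by (rule powr_add[symmetric])
    also have "(f i / \<alpha>) powr (1 + (q - 1)) = (f i / \<alpha>) powr q" by simp
    finally show ?thesis .
  qed
  have sfp: "(\<Sum>i\<in>I. f i * p i) = \<alpha>"
    using sum1 fp by (simp add: sum_distrib_left[symmetric])
  have pq: "p i powr (q / (q - 1)) = (f i / \<alpha>) powr q" for i
    unfolding p_def using q by (simp add: powr_powr)
  have "(\<Sum>i\<in>I. p i powr (q / (q - 1))) = 1" unfolding pq by (rule sum1)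
  then show ?thesis using a0 a1 aq sfp pb sum1 unfolding S_def by blast
qed

lemma doubly_stochastic_young_bound:
  fixes lam p s :: "nat \<Rightarrow> real" and D :: "nat \<Rightarrow> nat \<Rightarrow> nat \<Rightarrow> real"
  assumes fin: "finite I" "finite J" "finite K" and q: "q > 1" and g_0: "\<gamma> > 0"
    and l0: "\<forall>k\<in>K. lam k \<ge> 0" and p0: "\<forall>i\<in>I. p i \<ge> 0" and s0: "\<forall>j\<in>J. s j \<ge> 0"
    and D0: "\<forall>k\<in>K. \<forall>i\<in>I. \<forall>j\<in>J. D k i j \<ge> 0"
    and Dk: "\<forall>k\<in>K. (\<Sum>i\<in>I. \<Sum>j\<in>J. D k i j) = 1"
    and Dij: "\<forall>i\<in>I. \<forall>j\<in>J. (\<Sum>k\<in>K. D k i j) = 1"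
    and lq: "(\<Sum>k\<in>K. (lam k / \<gamma>) powr q) = 1"
    and pq: "(\<Sum>i\<in>I. p i powr (q / (q - 1))) = 1" and sq: "(\<Sum>j\<in>J. s j powr (q / (q - 1))) = 1"
  shows "(\<Sum>i\<in>I. \<Sum>j\<in>J. \<Sum>k\<in>K. D k i j * (lam k * (p i * s j))) \<le> \<gamma>"
proof -
  define q' where "q' = q / (q - 1)"
  have q'1: "q' > 1" unfolding q'_def using q by simp
  have conj: "1 / q + 1 / q' = 1" unfolding q'_def using q by (simp add: field_simps)
  define L where "L k = (lam k / \<gamma>) powr q" for k
  define P where "P i j = (p i * s j) powr q'" for i j
  have pw: "D k i j * (lam k * (p i * s j)) \<le> \<gamma> * (D k i j * (L k / q)) + \<gamma> * (D k i j * (P i j / q'))"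
    if k: "k \<in> K" and i: "i \<in> I" and j: "j \<in> J" for i j k
  proof -
    have ps0: "0 \<le> p i * s j" using p0 i s0 j by simp
    have y: "(lam k / \<gamma>) * (p i * s j) \<le> (lam k / \<gamma>) powr q / q + (p i * s j) powr q' / q'"
      by (rule Youngs_inequality) (use q q'1 conj l0 k g_0 ps0 in auto)
    have "D k i j * (lam k * (p i * s j)) = \<gamma> * D k i j * ((lam k / \<gamma>) * (p i * s j))"
      using g_0 by simp
    also have "\<dots> \<le> \<gamma> * D k i j * ((lam k / \<gamma>) powr q / q + (p i * s j) powr q' / q')"
      using y g_0 D0 k i j by (intro mult_left_mono) auto
    also have "\<dots> = \<gamma> * (D k i j * (L k / q)) + \<gamma> * (D k i j * (P i j / q'))"
      unfolding L_def P_def by (simp add: algebra_simps)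
    finally show ?thesis .
  qed
  have "(\<Sum>i\<in>I. \<Sum>j\<in>J. \<Sum>k\<in>K. D k i j * (lam k * (p i * s j))) \<le> (\<Sum>i\<in>I. \<Sum>j\<in>J. \<Sum>k\<in>K. \<gamma> * (D k i j * (L k / q)) + \<gamma> * (D k i j * (P i j / q')))"
    by (intro sum_mono) (use pw in auto)
  also have "\<dots> = (\<Sum>i\<in>I. \<Sum>j\<in>J. \<Sum>k\<in>K. \<gamma> * (D k i j * (L k / q))) +
     (\<Sum>i\<in>I. \<Sum>j\<in>J. \<Sum>k\<in>K. \<gamma> * (D k i j * (P i j / q')))"
    by (simp add: sum.distrib)
  also have "(\<Sum>i\<in>I. \<Sum>j\<in>J. \<Sum>k\<in>K. \<gamma> * (D k i j * (L k / q))) = \<gamma> / q"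
  proof -
    have "(\<Sum>i\<in>I. \<Sum>j\<in>J. \<Sum>k\<in>K. \<gamma> * (D k i j * (L k / q))) =
        (\<Sum>k\<in>K. \<Sum>i\<in>I. \<Sum>j\<in>J. \<gamma> * (D k i j * (L k / q)))" by (rule sum_swap3)
    also have "\<dots> = (\<Sum>k\<in>K. \<gamma> * (L k / q) * (\<Sum>i\<in>I. \<Sum>j\<in>J. D k i j))"
      by (simp add: sum_distrib_left sum_divide_distrib mult_ac)
    also have "\<dots> = (\<Sum>k\<in>K. \<gamma> * (L k / q))" by (rule sum.cong) (use Dk in auto)
    also have "\<dots> = \<gamma> / q * (\<Sum>k\<in>K. L k)" by (simp add: sum_distrib_left)
    finally show ?thesis using lq unfolding L_def by simp
  qed
  also have "(\<Sum>i\<in>I. \<Sum>j\<in>J. \<Sum>k\<in>K. \<gamma> * (D k i j * (P i j / q'))) = \<gamma> / q'"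
  proof -
    have "(\<Sum>i\<in>I. \<Sum>j\<in>J. \<Sum>k\<in>K. \<gamma> * (D k i j * (P i j / q'))) =
        (\<Sum>i\<in>I. \<Sum>j\<in>J. \<gamma> * (P i j / q') * (\<Sum>k\<in>K. D k i j))"
      by (simp add: sum_distrib_left sum_divide_distrib mult_ac)
    also have "\<dots> = (\<Sum>i\<in>I. \<Sum>j\<in>J. \<gamma> / q' * (p i powr q' * s j powr q'))"
      by (intro sum.cong refl) (use Dij in \<open>auto simp: P_def powr_mult\<close>)
    also have "\<dots> = \<gamma> / q' * (\<Sum>i\<in>I. \<Sum>j\<in>J. p i powr q' * s j powr q')"
      by (simp add: sum_distrib_left)
    also have "(\<Sum>i\<in>I. \<Sum>j\<in>J. p i powr q' * s j powr q') = (\<Sum>i\<in>I. p i powr q') * (\<Sum>j\<in>J. s j powr q')"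
      by (rule sum_product[symmetric])
    finally show ?thesis using pq sq unfolding q'_def by simp
  qed
  also have "\<gamma> / q + \<gamma> / q' = \<gamma> * (1 / q + 1 / q')" by (simp add: distrib_left)
  also have "\<dots> = \<gamma>" unfolding conj by simp
  finally show ?thesis .
qed

lemma marginal_pairing_le:
  fixes r p s :: "nat \<Rightarrow> _"
  assumes r0: "\<forall>i\<in>I. \<forall>j\<in>J. r i j \<ge> (0::real)" and rsum: "(\<Sum>i\<in>I. \<Sum>j\<in>J. r i j) = 1"
    and pb: "\<forall>i\<in>I. 0 \<le> p i \<and> p i \<le> 1" and sb: "\<forall>j\<in>J. 0 \<le> s j \<and> s j \<le> 1"
  shows "(\<Sum>i\<in>I. (\<Sum>j\<in>J. r i j) * p i) + (\<Sum>j\<in>J. (\<Sum>i\<in>I. r i j) * s j) \<le>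
    1 + (\<Sum>i\<in>I. \<Sum>j\<in>J. r i j * (p i * s j))"
proof -
  have "(\<Sum>j\<in>J. (\<Sum>i\<in>I. r i j) * s j) = (\<Sum>i\<in>I. \<Sum>j\<in>J. r i j * s j)"
    by (simp add: sum_distrib_right) (rule sum.swap)
  then have "(\<Sum>i\<in>I. (\<Sum>j\<in>J. r i j) * p i) + (\<Sum>j\<in>J. (\<Sum>i\<in>I. r i j) * s j) =
      (\<Sum>i\<in>I. \<Sum>j\<in>J. r i j * p i + r i j * s j)"
    by (simp add: sum.distrib sum_distrib_right)
  also have "\<dots> \<le> (\<Sum>i\<in>I. \<Sum>j\<in>J. r i j + r i j * (p i * s j))"
  proof (intro sum_mono)
    fix i j assume i: "i \<in> I" and j: "j \<in> J"
    have "0 \<le> r i j * ((1 - p i) * (1 - s j))"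
      using r0 pb sb i j by (intro mult_nonneg_nonneg) auto
    then show "r i j * p i + r i j * s j \<le> r i j + r i j * (p i * s j)"
      by (simp add: algebra_simps)
  qed
  also have "\<dots> = 1 + (\<Sum>i\<in>I. \<Sum>j\<in>J. r i j * (p i * s j))" by (simp add: sum.distrib rsum)
  finally show ?thesis .
qed

lemma doubly_stochastic_powr_inequality:
  fixes lam :: "nat \<Rightarrow> real" and D :: "nat \<Rightarrow> nat \<Rightarrow> nat \<Rightarrow> real"
  assumes fin: "finite I" "finite J" "finite K" and q: "q > 1"
    and l0: "\<forall>k\<in>K. lam k \<ge> 0" and ls: "(\<Sum>k\<in>K. lam k) = 1"
    and D0: "\<forall>k\<in>K. \<forall>i\<in>I. \<forall>j\<in>J. D k i j \<ge> 0"
    and Dk: "\<forall>k\<in>K. (\<Sum>i\<in>I. \<Sum>j\<in>J. D k i j) = 1"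
    and Dij: "\<forall>i\<in>I. \<forall>j\<in>J. (\<Sum>k\<in>K. D k i j) = 1"
  shows "(\<Sum>i\<in>I. (\<Sum>j\<in>J. \<Sum>k\<in>K. lam k * D k i j) powr q) +
    (\<Sum>j\<in>J. (\<Sum>i\<in>I. \<Sum>k\<in>K. lam k * D k i j) powr q) \<le> 1 + (\<Sum>k\<in>K. lam k powr q)"
proof -
  define r where "r i j = (\<Sum>k\<in>K. lam k * D k i j)" for i j
  define a where "a i = (\<Sum>j\<in>J. r i j)" for i
  define b where "b j = (\<Sum>i\<in>I. r i j)" for j
  have r0: "r i j \<ge> 0" if "i \<in> I" "j \<in> J" for i j
    unfolding r_def using l0 D0 that by (auto intro!: sum_nonneg)
  have rsum: "(\<Sum>i\<in>I. \<Sum>j\<in>J. r i j) = 1"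
  proof -
    have "(\<Sum>i\<in>I. \<Sum>j\<in>J. r i j) = (\<Sum>k\<in>K. lam k * (\<Sum>i\<in>I. \<Sum>j\<in>J. D k i j))"
      unfolding r_def by (subst sum_swap3) (simp add: sum_distrib_left)
    then show ?thesis using Dk ls by simp
  qed
  have a0: "\<forall>i\<in>I. a i \<ge> 0" and b0: "\<forall>j\<in>J. b j \<ge> 0"
    unfolding a_def b_def using r0 by (auto intro!: sum_nonneg)
  have swap: "(\<Sum>j\<in>J. \<Sum>i\<in>I. f i j) = (\<Sum>i\<in>I. \<Sum>j\<in>J. f i j)" for f :: "nat \<Rightarrow> nat \<Rightarrow> real"
    by (rule sum.swap)
  have asum: "(\<Sum>i\<in>I. a i) = 1" and bsum: "(\<Sum>j\<in>J. b j) = 1"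
    using rsum swap[of r] unfolding a_def b_def by simp_all
  obtain \<alpha> p where a_0: "0 < \<alpha>" and a_1: "\<alpha> \<le> 1" and aq: "\<alpha> powr q = (\<Sum>i\<in>I. a i powr q)"
    and ap: "(\<Sum>i\<in>I. a i * p i) = \<alpha>" and pb: "\<forall>i\<in>I. 0 \<le> p i \<and> p i \<le> 1"
    and pq: "(\<Sum>i\<in>I. p i powr (q / (q - 1))) = 1"
    using lq_norm_duality[OF fin(1) q a0 asum] by blast
  obtain \<beta> s where b_0: "0 < \<beta>" and b_1: "\<beta> \<le> 1" and bq: "\<beta> powr q = (\<Sum>j\<in>J. b j powr q)"
    and bs: "(\<Sum>j\<in>J. b j * s j) = \<beta>" and sb: "\<forall>j\<in>J. 0 \<le> s j \<and> s j \<le> 1"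
    and sq: "(\<Sum>j\<in>J. s j powr (q / (q - 1))) = 1"
    using lq_norm_duality[OF fin(2) q b0 bsum] by blast
  obtain \<gamma> where g_0: "0 < \<gamma>" and g_1: "\<gamma> \<le> 1" and gq: "\<gamma> powr q = (\<Sum>k\<in>K. lam k powr q)"
    and lq: "(\<Sum>k\<in>K. (lam k / \<gamma>) powr q) = 1"
    using lq_norm_duality[OF fin(3) q l0 ls] by blast
  define T where "T = (\<Sum>i\<in>I. \<Sum>j\<in>J. r i j * (p i * s j))"
  have "\<alpha> + \<beta> \<le> 1 + T"
    unfolding ap[symmetric] bs[symmetric] a_def b_def T_def
    by (rule marginal_pairing_le) (use r0 rsum pb sb in auto)
  also have "T \<le> \<gamma>"
  proof -
    have "T = (\<Sum>i\<in>I. \<Sum>j\<in>J. \<Sum>k\<in>K. D k i j * (lam k * (p i * s j)))"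
      unfolding T_def r_def by (simp add: sum_distrib_left sum_distrib_right mult_ac)
    also have "\<dots> \<le> \<gamma>"
      by (rule doubly_stochastic_young_bound[OF fin q g_0 l0 _ _ D0 Dk Dij lq pq sq])
        (use pb sb in auto)
    finally show ?thesis .
  qed
  finally have "\<alpha> powr q + \<beta> powr q \<le> 1 + \<gamma> powr q"
    by (intro powr_add_le_one_add_powr) (use q a_0 a_1 b_0 b_1 g_0 g_1 in auto)
  then show ?thesis using aq bq gq unfolding a_def b_def r_def by simp
qed

section \<open>Subadditivity of the Tsallis entropy\<close>

text \<open>The inner product of \<open>\<phi> \<otimes> \<chi>\<close> with \<open>\<psi>\<close> in \<open>H\<^sub>X \<otimes> H\<^sub>Y = H\<^bsub>X \<union> Y\<^esub>\<close>.\<close>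

definition overlap :: "('a \<Rightarrow> nat) \<Rightarrow> 'a set \<Rightarrow> 'a set \<Rightarrow>
    ('a config \<Rightarrow> complex) \<Rightarrow> ('a config \<Rightarrow> complex) \<Rightarrow> ('a config \<Rightarrow> complex) \<Rightarrow> complex" where
  "overlap d X Y \<phi> \<chi> \<psi> = (\<Sum>x\<in>configs d X. \<Sum>y\<in>configs d Y. cnj (\<phi> x) * cnj (\<chi> y) * \<psi> (glue X x y))"

lemma overlap_swap:
  assumes "X \<inter> Y = {}"
  shows "overlap d Y X \<chi> \<phi> \<psi> = overlap d X Y \<phi> \<chi> \<psi>"
proof -
  have "overlap d Y X \<chi> \<phi> \<psi> = (\<Sum>x\<in>configs d X. \<Sum>y\<in>configs d Y. cnj (\<chi> y) * cnj (\<phi> x) * \<psi> (glue Y y x))"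
    unfolding overlap_def by (rule sum.swap)
  also have "\<dots> = overlap d X Y \<phi> \<chi> \<psi>"
    unfolding overlap_def using glue_swap[OF _ _ assms] by (intro sum.cong refl) (simp add: mult_ac)
  finally show ?thesis .
qed

lemma overlap_eq_sum_right:
  "overlap d X Y \<phi> \<chi> \<psi> = (\<Sum>y\<in>configs d Y. cnj (\<chi> y) * (\<Sum>x\<in>configs d X. cnj (\<phi> x) * \<psi> (glue X x y)))"
  unfolding overlap_def by (subst sum.swap) (simp add: sum_distrib_left mult_ac)

lemma sum_overlap_product_basis:
  assumes fin: "finite X" "finite Y" and XY: "X \<inter> Y = {}"
    and u: "orthonormal_basis (configs d X) NX u" and w: "orthonormal_basis (configs d Y) NY w"
  shows "(\<Sum>i<NX. \<Sum>j<NY. (cmod (overlap d X Y (u i) (w j) \<psi>))\<^sup>2) =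
    (\<Sum>c\<in>configs d (X \<union> Y). (cmod (\<psi> c))\<^sup>2)"
proof -
  define G where "G i y = (\<Sum>x\<in>configs d X. cnj (u i x) * \<psi> (glue X x y))" for i y
  have "(\<Sum>i<NX. \<Sum>j<NY. (cmod (overlap d X Y (u i) (w j) \<psi>))\<^sup>2) =
      (\<Sum>i<NX. \<Sum>y\<in>configs d Y. (cmod (G i y))\<^sup>2)"
    unfolding overlap_eq_sum_right G_def[symmetric]
    using parseval[OF finite_configs[OF fin(2)] w] by simp
  also have "\<dots> = (\<Sum>y\<in>configs d Y. \<Sum>x\<in>configs d X. (cmod (\<psi> (glue X x y)))\<^sup>2)"
    unfolding G_def using parseval[OF finite_configs[OF fin(1)] u] by (subst sum.swap) simp
  also have "\<dots> = (\<Sum>c\<in>configs d (X \<union> Y). (cmod (\<psi> c))\<^sup>2)"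
    unfolding sum_configs_Un[OF XY] by (rule sum.swap)
  finally show ?thesis .
qed

lemma sum_overlap_basis:
  assumes fin: "finite X" "finite Y" and XY: "X \<inter> Y = {}"
    and e: "orthonormal_basis (configs d (X \<union> Y)) NK e"
  shows "(\<Sum>k<NK. (cmod (overlap d X Y \<phi> \<chi> (e k)))\<^sup>2) =
    (\<Sum>x\<in>configs d X. (cmod (\<phi> x))\<^sup>2) * (\<Sum>y\<in>configs d Y. (cmod (\<chi> y))\<^sup>2)"
proof -
  define \<Phi> where "\<Phi> c = \<phi> (restr X c) * \<chi> (restr Y c)" for c
  have \<Phi>_glue: "\<Phi> (glue X x y) = \<phi> x * \<chi> y" if "x \<in> configs d X" "y \<in> configs d Y" for x y
    unfolding \<Phi>_def using restr_glue[OF that XY] by simp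
  have "overlap d X Y \<phi> \<chi> (e k) = cnj (\<Sum>c\<in>configs d (X \<union> Y). cnj (e k c) * \<Phi> c)" for k
    unfolding overlap_def sum_configs_Un[OF XY] by (simp add: \<Phi>_glue mult_ac)
  then have "cmod (overlap d X Y \<phi> \<chi> (e k)) = cmod (\<Sum>c\<in>configs d (X \<union> Y). cnj (e k c) * \<Phi> c)" for k
    by (metis complex_mod_cnj)
  then have "(\<Sum>k<NK. (cmod (overlap d X Y \<phi> \<chi> (e k)))\<^sup>2) = (\<Sum>c\<in>configs d (X \<union> Y). (cmod (\<Phi> c))\<^sup>2)"
    using parseval[OF finite_configs e] fin by simp
  also have "\<dots> = (\<Sum>x\<in>configs d X. \<Sum>y\<in>configs d Y. (cmod (\<phi> x))\<^sup>2 * (cmod (\<chi> y))\<^sup>2)"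
    unfolding sum_configs_Un[OF XY] by (simp add: \<Phi>_glue norm_mult power_mult_distrib)
  finally show ?thesis by (simp add: sum_product)
qed

lemma quadform_mixture:
  assumes "\<forall>x\<in>CX. \<forall>x'\<in>CX. S x x' = (\<Sum>y\<in>CY. \<Sum>k<N. complex_of_real (lam k) * E k x y * cnj (E k x' y))"
  shows "quadform CX S \<psi> = complex_of_real
    (\<Sum>k<N. lam k * (\<Sum>y\<in>CY. (cmod (\<Sum>x\<in>CX. cnj (\<psi> x) * E k x y))\<^sup>2))"
proof -
  define F where "F x x' y k = complex_of_real (lam k) * (cnj (\<psi> x) * E k x y) * (\<psi> x' * cnj (E k x' y))"
    for x x' y k
  have "quadform CX S \<psi> = (\<Sum>x\<in>CX. \<Sum>x'\<in>CX. \<Sum>y\<in>CY. \<Sum>k<N. F x x' y k)"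
    unfolding quadform_def F_def using assms
    by (intro sum.cong refl) (simp add: sum_distrib_left sum_distrib_right mult_ac)
  also have "\<dots> = (\<Sum>x\<in>CX. \<Sum>x'\<in>CX. \<Sum>k<N. \<Sum>y\<in>CY. F x x' y k)"
    by (intro sum.cong refl) (rule sum.swap)
  also have "\<dots> = (\<Sum>k<N. \<Sum>x\<in>CX. \<Sum>x'\<in>CX. \<Sum>y\<in>CY. F x x' y k)"
    by (rule sum_swap3)
  also have "\<dots> = (\<Sum>k<N. \<Sum>y\<in>CY. \<Sum>x\<in>CX. \<Sum>x'\<in>CX. F x x' y k)"
    by (intro sum.cong refl) (rule sum_swap3)
  also have "\<dots> = (\<Sum>k<N. complex_of_real (lam k) * (\<Sum>y\<in>CY.
      (\<Sum>x\<in>CX. cnj (\<psi> x) * E k x y) * cnj (\<Sum>x\<in>CX. cnj (\<psi> x) * E k x y)))"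
    unfolding F_def by (simp add: sum_distrib_left sum_product mult_ac)
  also have "\<dots> = complex_of_real (\<Sum>k<N. lam k * (\<Sum>y\<in>CY. (cmod (\<Sum>x\<in>CX. cnj (\<psi> x) * E k x y))\<^sup>2))"
    by (simp only: of_real_sum of_real_mult complex_norm_square)
  finally show ?thesis .
qed

lemma reduced_eigenvalue_overlap:
  assumes fA: "finite A" and XY: "X \<inter> Y = {}" and XYA: "X \<union> Y \<subseteq> A"
    and u: "eigen_decomposition (configs d X) NX u a (reduced d A \<rho> X)"
    and w: "orthonormal_basis (configs d Y) NY w"
    and e: "eigen_decomposition (configs d (X \<union> Y)) NK e lam (reduced d A \<rho> (X \<union> Y))"
    and i: "i < NX"
  shows "a i = (\<Sum>j<NY. \<Sum>k<NK. lam k * (cmod (overlap d X Y (u i) (w j) (e k)))\<^sup>2)"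
proof -
  let ?CX = "configs d X" and ?CY = "configs d Y"
  have fY: "finite Y" using fA XYA finite_subset by auto
  have marg: "\<forall>x\<in>?CX. \<forall>x'\<in>?CX. reduced d A \<rho> X x x' = (\<Sum>y\<in>?CY. \<Sum>k<NK.
      complex_of_real (lam k) * e k (glue X x y) * cnj (e k (glue X x' y)))"
  proof (intro ballI)
    fix x x' assume x: "x \<in> ?CX" and x': "x' \<in> ?CX"
    have "X \<union> Y - X = Y" using XY by auto
    then have "reduced d A \<rho> X x x' = (\<Sum>y\<in>?CY. reduced d A \<rho> (X \<union> Y) (glue X x y) (glue X x' y))"
      using reduced_reduced[OF _ XYA, of X] by simp
    moreover have "reduced d A \<rho> (X \<union> Y) (glue X x y) (glue X x' y) = (\<Sum>k<NK.
        complex_of_real (lam k) * e k (glue X x y) * cnj (e k (glue X x' y)))" if "y \<in> ?CY" for y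
      using e glue_in_configs[OF x that] glue_in_configs[OF x' that]
      unfolding eigen_decomposition_def by blast
    ultimately show "reduced d A \<rho> X x x' = (\<Sum>y\<in>?CY. \<Sum>k<NK.
        complex_of_real (lam k) * e k (glue X x y) * cnj (e k (glue X x' y)))"
      by simp
  qed
  have "complex_of_real (a i) = complex_of_real (\<Sum>k<NK. lam k *
      (\<Sum>y\<in>?CY. (cmod (\<Sum>x\<in>?CX. cnj (u i x) * e k (glue X x y)))\<^sup>2))"
    unfolding eigen_decomposition_quadform[OF u i, symmetric] by (rule quadform_mixture[OF marg])
  also have "\<dots> = complex_of_real (\<Sum>k<NK. lam k *
      (\<Sum>j<NY. (cmod (overlap d X Y (u i) (w j) (e k)))\<^sup>2))"
    unfolding overlap_eq_sum_right using parseval[OF finite_configs[OF fY] w] by simp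
  finally have "a i = (\<Sum>k<NK. lam k * (\<Sum>j<NY. (cmod (overlap d X Y (u i) (w j) (e k)))\<^sup>2))"
    by (simp only: of_real_eq_iff)
  also have "\<dots> = (\<Sum>j<NY. \<Sum>k<NK. lam k * (cmod (overlap d X Y (u i) (w j) (e k)))\<^sup>2)"
    unfolding sum_distrib_left by (rule sum.swap)
  finally show ?thesis .
qed

lemma reduced_powr_sum_inequality:
  assumes fA: "finite A" and XY: "X \<inter> Y = {}" and XYA: "X \<union> Y \<subseteq> A" and q: "q > 1"
    and u: "eigen_decomposition (configs d X) NX u a (reduced d A \<rho> X)"
    and w: "eigen_decomposition (configs d Y) NY w b (reduced d A \<rho> Y)"
    and e: "eigen_decomposition (configs d (X \<union> Y)) NK e lam (reduced d A \<rho> (X \<union> Y))"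
    and l0: "\<forall>k<NK. lam k \<ge> 0" and ls: "(\<Sum>k<NK. lam k) = 1"
  shows "(\<Sum>i<NX. a i powr q) + (\<Sum>j<NY. b j powr q) \<le> 1 + (\<Sum>k<NK. lam k powr q)"
proof -
  have fX: "finite X" and fY: "finite Y" using fA XYA finite_subset by auto
  have onb_u: "orthonormal_basis (configs d X) NX u" and onb_w: "orthonormal_basis (configs d Y) NY w"
    and onb_e: "orthonormal_basis (configs d (X \<union> Y)) NK e"
    using u w e by (simp_all add: eigen_decomposition_def)
  define D where "D k i j = (cmod (overlap d X Y (u i) (w j) (e k)))\<^sup>2" for k i j
  have a_eq: "a i = (\<Sum>j<NY. \<Sum>k<NK. lam k * D k i j)" if "i < NX" for i
    unfolding D_def by (rule reduced_eigenvalue_overlap[OF fA XY XYA u onb_w e that])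
  have b_eq: "b j = (\<Sum>i<NX. \<Sum>k<NK. lam k * D k i j)" if "j < NY" for j
  proof -
    have "b j = (\<Sum>i<NX. \<Sum>k<NK. lam k * (cmod (overlap d Y X (w j) (u i) (e k)))\<^sup>2)"
      by (rule reduced_eigenvalue_overlap[OF fA _ _ w onb_u _ that])
        (use XY XYA e in \<open>auto simp: Un_commute\<close>)
    then show ?thesis unfolding D_def overlap_swap[OF XY] .
  qed
  have "(\<Sum>i<NX. (\<Sum>j<NY. \<Sum>k<NK. lam k * D k i j) powr q) +
      (\<Sum>j<NY. (\<Sum>i<NX. \<Sum>k<NK. lam k * D k i j) powr q) \<le> 1 + (\<Sum>k<NK. lam k powr q)"
  proof (rule doubly_stochastic_powr_inequality)
    show "\<forall>k\<in>{..<NK}. (\<Sum>i<NX. \<Sum>j<NY. D k i j) = 1"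
      using sum_overlap_product_basis[OF fX fY XY onb_u onb_w] orthonormal_basis_norm[OF onb_e]
      unfolding D_def by simp
    show "\<forall>i\<in>{..<NX}. \<forall>j\<in>{..<NY}. (\<Sum>k<NK. D k i j) = 1"
      using sum_overlap_basis[OF fX fY XY onb_e] orthonormal_basis_norm[OF onb_u]
        orthonormal_basis_norm[OF onb_w]
      unfolding D_def by simp
  qed (use q l0 ls in \<open>auto simp: D_def\<close>)
  then show ?thesis by (simp add: a_eq b_eq)
qed

definition tsallis_spectrum :: "real \<Rightarrow> nat \<Rightarrow> (nat \<Rightarrow> real) \<Rightarrow> real" where
  "tsallis_spectrum q N lam =
     (if q = 1 then (\<Sum>k<N. - lam k * ln (lam k)) else ((\<Sum>k<N. lam k powr q) - 1) / (1 - q))"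

lemma tsallis_eigenvalues:
  assumes "eigenvalues d J (reduced d A \<rho> J) = mset (map (\<lambda>k. complex_of_real (lam k)) [0..<N])"
  shows "tsallis q d A \<rho> J = tsallis_spectrum q N lam"
proof -
  have "(\<Sum>x\<in>#mset (map g [0..<N]). F x) = (\<Sum>k<N. F (g k))" for g :: "nat \<Rightarrow> complex" and F :: "complex \<Rightarrow> real"
    by (induction N) (auto simp: add.commute)
  then show ?thesis unfolding tsallis_def tsallis_spectrum_def Let_def assms by simp
qed

lemma tsallis_quotient_tendsto_entropy:
  fixes lam :: "nat \<Rightarrow> real"
  assumes l0: "\<forall>k<N. lam k \<ge> 0" and ls: "(\<Sum>k<N. lam k) = 1"
  shows "((\<lambda>q. ((\<Sum>k<N. lam k powr q) - 1) / (1 - q)) \<longlongrightarrow> (\<Sum>k<N. - lam k * ln (lam k))) (at 1)"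
proof -
  define h where "h q = (\<Sum>k<N. lam k powr q)" for q
  have "((\<lambda>q. lam k powr q) has_real_derivative (lam k * ln (lam k))) (at 1)" if k: "k < N" for k
  proof (cases "lam k = 0")
    case False
    then have pos: "lam k > 0" using l0 k by force
    have "((\<lambda>q. lam k powr q) has_real_derivative (lam k powr 1 * (1 * ln (lam k) + 0 * 1 / lam k))) (at 1)"
      by (rule DERIV_powr[where g = "\<lambda>_. lam k" and f = "\<lambda>q. q"]) (auto intro: derivative_eq_intros simp: pos)
    then show ?thesis using pos by simp
  qed simp
  then have "(h has_real_derivative (\<Sum>k<N. lam k * ln (lam k))) (at 1)"
    unfolding h_def by (intro DERIV_sum) auto
  then have "((\<lambda>q. - ((h q - h 1) / (q - 1))) \<longlongrightarrow> - (\<Sum>k<N. lam k * ln (lam k))) (at 1)"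
    by (intro tendsto_minus) (simp add: has_field_derivative_iff)
  moreover have "h 1 = 1" unfolding h_def using l0 ls by simp
  ultimately show ?thesis
    by (simp add: h_def minus_divide_right sum_negf)
qed

lemma tsallis_spectrum_subadditive:
  fixes a b lam :: "nat \<Rightarrow> real"
  assumes a0: "\<forall>k<NX. a k \<ge> 0" and as: "(\<Sum>k<NX. a k) = 1"
    and b0: "\<forall>k<NY. b k \<ge> 0" and bs: "(\<Sum>k<NY. b k) = 1"
    and l0: "\<forall>k<NK. lam k \<ge> 0" and ls: "(\<Sum>k<NK. lam k) = 1"
    and powr_ineq: "\<And>r. r > 1 \<Longrightarrow> (\<Sum>k<NX. a k powr r) + (\<Sum>k<NY. b k powr r) \<le> 1 + (\<Sum>k<NK. lam k powr r)"
    and q: "q \<ge> 1"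
  shows "tsallis_spectrum q NK lam \<le> tsallis_spectrum q NX a + tsallis_spectrum q NY b"
proof -
  define T where "T N f r = ((\<Sum>k<N. f k powr r) - 1) / (1 - r)" for N and f :: "nat \<Rightarrow> real" and r
  have gt: "T NK lam r \<le> T NX a r + T NY b r" if r: "r > 1" for r
  proof -
    have "((\<Sum>k<NK. lam k powr r) - 1) / (1 - r) \<le>
        ((\<Sum>k<NX. a k powr r) + (\<Sum>k<NY. b k powr r) - 2) / (1 - r)"
      using powr_ineq[OF r] r by (intro divide_right_mono_neg) auto
    then show ?thesis unfolding T_def by (simp add: diff_divide_distrib add_divide_distrib)
  qed
  show ?thesis
  proof (cases "q = 1")
    case False
    then show ?thesis using gt[of q] q unfolding tsallis_spectrum_def T_def by simp
  next
    case True
    have lim: "(T N f \<longlongrightarrow> (\<Sum>k<N. - f k * ln (f k))) (at_right 1)"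
      if "\<forall>k<N. f k \<ge> 0" "(\<Sum>k<N. f k) = 1" for N f
      using tsallis_quotient_tendsto_entropy[OF that] unfolding T_def filterlim_at_split by blast
    have "(\<Sum>k<NK. - lam k * ln (lam k)) \<le> (\<Sum>k<NX. - a k * ln (a k)) + (\<Sum>k<NY. - b k * ln (b k))"
    proof (rule tendsto_le[OF trivial_limit_at_right_real])
      show "((\<lambda>r. T NX a r + T NY b r) \<longlongrightarrow>
          (\<Sum>k<NX. - a k * ln (a k)) + (\<Sum>k<NY. - b k * ln (b k))) (at_right 1)"
        by (intro tendsto_add lim a0 as b0 bs)
      show "eventually (\<lambda>r. T NK lam r \<le> T NX a r + T NY b r) (at_right (1::real))"
        using eventually_at_right_less[of "1::real"] by eventually_elim (rule gt)
    qed (rule lim[OF l0 ls])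
    then show ?thesis using True unfolding tsallis_spectrum_def by simp
  qed
qed

lemma tsallis_subadditive:
  assumes fA: "finite A" and dens: "density_op d A \<rho>" and XY: "X \<inter> Y = {}" and XYA: "X \<union> Y \<subseteq> A"
    and q: "q \<ge> 1"
  shows "tsallis q d A \<rho> (X \<union> Y) \<le> tsallis q d A \<rho> X + tsallis q d A \<rho> Y"
proof -
  have fX: "finite X" and fY: "finite Y" and fK: "finite (X \<union> Y)" using fA XYA finite_subset by auto
  obtain NX u a where u: "eigen_decomposition (configs d X) NX u a (reduced d A \<rho> X)"
    and a0: "\<forall>k<NX. a k \<ge> 0" and as: "(\<Sum>k<NX. a k) = 1"
    and ea: "eigenvalues d X (reduced d A \<rho> X) = mset (map (\<lambda>k. complex_of_real (a k)) [0..<NX])"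
    using density_eigen_decomposition[OF fX density_op_reduced[OF fA _ dens]] XYA by blast
  obtain NY w b where w: "eigen_decomposition (configs d Y) NY w b (reduced d A \<rho> Y)"
    and b0: "\<forall>k<NY. b k \<ge> 0" and bs: "(\<Sum>k<NY. b k) = 1"
    and eb: "eigenvalues d Y (reduced d A \<rho> Y) = mset (map (\<lambda>k. complex_of_real (b k)) [0..<NY])"
    using density_eigen_decomposition[OF fY density_op_reduced[OF fA _ dens]] XYA by blast
  obtain NK e lam where e: "eigen_decomposition (configs d (X \<union> Y)) NK e lam (reduced d A \<rho> (X \<union> Y))"
    and l0: "\<forall>k<NK. lam k \<ge> 0" and ls: "(\<Sum>k<NK. lam k) = 1"
    and el: "eigenvalues d (X \<union> Y) (reduced d A \<rho> (X \<union> Y)) =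
      mset (map (\<lambda>k. complex_of_real (lam k)) [0..<NK])"
    using density_eigen_decomposition[OF fK density_op_reduced[OF fA XYA dens]] by blast
  have "tsallis_spectrum q NK lam \<le> tsallis_spectrum q NX a + tsallis_spectrum q NY b"
    using reduced_powr_sum_inequality[OF fA XY XYA _ u w e l0 ls]
    by (intro tsallis_spectrum_subadditive[OF a0 as b0 bs l0 ls _ q])
  then show ?thesis unfolding tsallis_eigenvalues[OF ea] tsallis_eigenvalues[OF eb] tsallis_eigenvalues[OF el] .
qed

lemma tsallis_subadditive_sum:
  assumes fA: "finite A" and dens: "density_op d A \<rho>" and q: "q \<ge> 1"
    and "finite F" and "F \<inter> I = {}" and "I \<union> F \<subseteq> A"
  shows "tsallis q d A \<rho> (I \<union> F) \<le> tsallis q d A \<rho> I + (\<Sum>v\<in>F. tsallis q d A \<rho> {v})"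
  using assms(4-)
proof (induction F rule: finite_induct)
  case (insert x F)
  have "I \<union> insert x F = (I \<union> F) \<union> {x}" by auto
  moreover have "tsallis q d A \<rho> ((I \<union> F) \<union> {x}) \<le> tsallis q d A \<rho> (I \<union> F) + tsallis q d A \<rho> {x}"
    by (rule tsallis_subadditive[OF fA dens _ _ q]) (use insert in auto)
  ultimately show ?case using insert by (simp add: add.assoc)
qed simp

theorem lemma1:
  fixes A :: "'a set" and d :: "'a \<Rightarrow> nat" and \<rho> :: "'a op"
    and q :: real and I J :: "'a set"
  assumes "finite A"
    and "\<forall>v\<in>A. d v \<ge> 1"
    and "density_op d A \<rho>"
    and "q \<ge> 1"
    and "I \<noteq> {}" and "I \<subseteq> J" and "J \<subseteq> A"
  shows "total_corr q d A \<rho> I \<le> total_corr q d A \<rho> J"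
proof -
  have fJ: "finite J" using assms(1,7) finite_subset by auto
  have "tsallis q d A \<rho> (I \<union> (J - I)) \<le> tsallis q d A \<rho> I + (\<Sum>v\<in>J - I. tsallis q d A \<rho> {v})"
    by (rule tsallis_subadditive_sum[OF assms(1,3,4)]) (use fJ assms(6,7) in auto)
  moreover have "I \<union> (J - I) = J" using assms(6) by auto
  moreover have "(\<Sum>v\<in>J. tsallis q d A \<rho> {v}) =
      (\<Sum>v\<in>J - I. tsallis q d A \<rho> {v}) + (\<Sum>v\<in>I. tsallis q d A \<rho> {v})"
    by (rule sum.subset_diff[OF assms(6) fJ])
  ultimately show ?thesis unfolding total_corr_def by simp
qed
end
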